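(* Let $V\subseteq\mathbb{R}^n$ be any real algebraic variety. Then: (i) there exists a finite normal form game with $3$ players whose set of totally mixed Nash equilibria is stably isomorphic to $V$; and (ii) there exists a finite normal form game with some number $N$ of players, each of whom has exactly two pure strategies, whose set of totally mixed Nash equilibria is stably isomorphic to $V$.
   Context: A real algebraic variety is the set of common real zeros in $\mathbb{R}^n$ of finitely many real polynomials; a semialgebraic set is a subset of some $\mathbb{R}^k$ defined by a finite Boolean combination of real polynomial equations and inequalities. Two semialgebraic sets are semialgebraically isomorphic if there is a homeomorphism between them whose graph is a semialgebraic set. Two semialgebraic sets are stably isomorphic if they are equivalent under the equivalence relation generated by semialgebraic isomorphisms and the canonical projections $W\times\mathbb{R}^k\to W$ ($k\ge 0$). A finite normal form game consists of players $I=\{1,\dots,N\}$, finite pure strategy sets $S_i=\{s_{i0},\dots,s_{id_i}\}$, and payoff functions $u_i:S=\prod_i S_i\to\mathbb{R}$. A mixed strategy of player $i$ is a function $\sigma_i:S_i\to[0,1]$ with $\sum_{s\in S_i}\sigma_i(s)=1$; a strategy profile is $\sigma=(\sigma_1,\dots,\sigma_N)$, and the expected payoff is $u_i(\sigma)=\sum_{s\in S}u_i(s)\sigma_1(s_1)\cdots\sigma_N(s_N)$. We write $u_i(s_{ij},\sigma_{-i})$ for the expected payoff of player $i$ when $i$ plays the pure strategy $s_{ij}$ and the others play according to $\sigma$. A profile $\sigma$ is a totally mixed Nash equilibrium if $0<\sigma_i(s_{ij})<1$ for all $i,j$ and $u_i(s_{ij},\sigma_{-i})=u_i(s_{i0},\sigma_{-i})$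 for all $i$ and all $j=1,\dots,d_i$. The set of totally mixed Nash equilibria is regarded as a semialgebraic subset of $\mathbb{R}^{\sum_i d_i}$ via the coordinates $(\sigma_i(s_{ij}))_{i\in I,\,1\le j\le d_i}$. *)

theory Defs
  imports "HOL-Analysis.Analysis"
begin

text \<open>A point of R^k is represented by a function x :: nat => real with
  x i = 0 for all i >= k (coordinates x 0, ..., x (k-1)).  The type nat => real
  carries the product topology, whose restriction to R^k is the Euclidean one.\<close>

definition Rk :: "nat \<Rightarrow> (nat \<Rightarrow> real) set" where
  "Rk k = {x. \<forall>i\<ge>k. x i = 0}"

inductive poly_fn :: "((nat \<Rightarrow> real) \<Rightarrow> real) \<Rightarrow> bool" where
  const: "poly_fn (\<lambda>x. c)"
| coord: "poly_fn (\<lambda>x. x i)"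
| add: "poly_fn p \<Longrightarrow> poly_fn q \<Longrightarrow> poly_fn (\<lambda>x. p x + q x)"
| mult: "poly_fn p \<Longrightarrow> poly_fn q \<Longrightarrow> poly_fn (\<lambda>x. p x * q x)"

definition real_variety :: "nat \<Rightarrow> (nat \<Rightarrow> real) set \<Rightarrow> bool" where
  "real_variety n V \<longleftrightarrow>
     (\<exists>P. finite P \<and> (\<forall>p\<in>P. poly_fn p) \<and> V = {x \<in> Rk n. \<forall>p\<in>P. p x = 0})"

inductive semialg :: "nat \<Rightarrow> (nat \<Rightarrow> real) set \<Rightarrow> bool" for k where
  eq: "poly_fn p \<Longrightarrow> semialg k {x \<in> Rk k. p x = 0}"
| gt: "poly_fn p \<Longrightarrow> semialg k {x \<in> Rk k. p x > 0}"
| union: "semialg k S \<Longrightarrow> semialg k T \<Longrightarrow> semialg k (S \<union> T)"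
| compl: "semialg k S \<Longrightarrow> semialg k (Rk k - S)"

definition join :: "nat \<Rightarrow> (nat \<Rightarrow> real) \<Rightarrow> (nat \<Rightarrow> real) \<Rightarrow> (nat \<Rightarrow> real)" where
  "join k x y = (\<lambda>i. if i < k then x i else y (i - k))"

definition semialg_iso ::
  "nat \<Rightarrow> (nat \<Rightarrow> real) set \<Rightarrow> nat \<Rightarrow> (nat \<Rightarrow> real) set \<Rightarrow> bool" where
  "semialg_iso k S m T \<longleftrightarrow> semialg k S \<and> semialg m T \<and>
     (\<exists>f g. homeomorphism S T f g \<and> semialg (k + m) {join k x (f x) | x. x \<in> S})"

definition cyl :: "nat \<Rightarrow> (nat \<Rightarrow> real) set \<Rightarrow> nat \<Rightarrow> (nat \<Rightarrow> real) set" where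
  "cyl k W j = {x \<in> Rk (k + j). (\<lambda>i. if i < k then x i else 0) \<in> W}"

inductive stably_iso ::
  "nat \<times> (nat \<Rightarrow> real) set \<Rightarrow> nat \<times> (nat \<Rightarrow> real) set \<Rightarrow> bool" where
  iso: "semialg_iso k S m T \<Longrightarrow> stably_iso (k, S) (m, T)"
| proj: "semialg k W \<Longrightarrow> stably_iso (k + j, cyl k W j) (k, W)"
| sym: "stably_iso A B \<Longrightarrow> stably_iso B A"
| trans: "stably_iso A B \<Longrightarrow> stably_iso B C \<Longrightarrow> stably_iso A C"

text \<open>Players are 0, ..., N-1; player i has pure strategies 0, ..., d i
  (strategy j stands for s_(i,j)); u i s is the payoff of player i at the pure
  profile s.  Pure profiles are normalised to s l = 0 for l >= N.\<close>

definition profiles :: "nat \<Rightarrow> (nat \<Rightarrow> nat) \<Rightarrow> (nat \<Rightarrow> nat) set" where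
  "profiles N d = {s. (\<forall>i<N. s i \<le> d i) \<and> (\<forall>i\<ge>N. s i = 0)}"

text \<open>u_i(s_ij, sigma_-i), where sigma l j is the probability that player l plays j.\<close>
definition dev_payoff ::
  "nat \<Rightarrow> (nat \<Rightarrow> nat) \<Rightarrow> (nat \<Rightarrow> (nat \<Rightarrow> nat) \<Rightarrow> real) \<Rightarrow>
   (nat \<Rightarrow> nat \<Rightarrow> real) \<Rightarrow> nat \<Rightarrow> nat \<Rightarrow> real" where
  "dev_payoff N d u \<sigma> i j =
     (\<Sum>s \<in> {s \<in> profiles N d. s i = j}. u i s * (\<Prod>l \<in> {..<N} - {i}. \<sigma> l (s l)))"

text \<open>Coordinates: (sigma_i(s_ij)) for i < N, 1 <= j <= d i, ordered
  player-major; coordinate index of (i,j) is (sum of d l, l < i) + (j - 1).\<close>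
definition offset :: "(nat \<Rightarrow> nat) \<Rightarrow> nat \<Rightarrow> nat" where
  "offset d i = (\<Sum>l<i. d l)"

definition strat_of_coords ::
  "(nat \<Rightarrow> nat) \<Rightarrow> (nat \<Rightarrow> real) \<Rightarrow> nat \<Rightarrow> nat \<Rightarrow> real" where
  "strat_of_coords d y i j =
     (if j = 0 then 1 - (\<Sum>j'\<in>{1..d i}. y (offset d i + j' - 1))
      else y (offset d i + j - 1))"

definition tmne ::
  "nat \<Rightarrow> (nat \<Rightarrow> nat) \<Rightarrow> (nat \<Rightarrow> (nat \<Rightarrow> nat) \<Rightarrow> real) \<Rightarrow> (nat \<Rightarrow> real) set" where
  "tmne N d u = {y \<in> Rk (\<Sum>i<N. d i).
     (\<forall>i<N. \<forall>j\<le>d i. 0 < strat_of_coords d y i j \<and> strat_of_coords d y i j < 1) \<and>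
     (\<forall>i<N. \<forall>j\<in>{1..d i}.
        dev_payoff N d u (strat_of_coords d y) i j = dev_payoff N d u (strat_of_coords d y) i 0)}"

end

theory Submission
  imports Defs
begin

text \<open>
  A real variety is the zero set of a single polynomial \<open>Q\<close> (a sum of squares). Writing
  \<open>x_j = z_j / z_(n+j) - z_(n+j) / z_j\<close> for a pair \<open>z_j, z_(n+j) > 0\<close> with prescribed sum \<open>eps\<close>
  parametrises \<open>\<real>\<^sup>n\<close> homeomorphically, and clearing denominators turns \<open>Q x = 0\<close> into
  \<open>E z = 0\<close> for a polynomial \<open>E\<close>. Evaluating \<open>E\<close> by an arithmetic circuit whose node values
  are rescaled into \<open>(0, eps)\<close> expresses \<open>E z = 0\<close> as a system of equations, each of them
  affine or bilinear in two copies of the coordinates; its positive solutions (the core) are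
  semialgebraically homeomorphic to the variety.

  The coordinates of a core point are positive and small, so they can be read as the
  probabilities of the non-default strategies of dummy players: either two players, one per
  copy, with one strategy per coordinate, or one two-strategy player per coordinate. One further
  player whose strategies pay the values of the equations (resp. one further two-strategy player
  per equation) is indifferent exactly on the core. Hence the totally mixed equilibria form the
  core times an open simplex (resp. an open cube) of the extra players' mixed strategies, which
  is stably isomorphic to the core.
\<close>

lemma shifted_index:
  fixes i m :: nat
  assumes "\<not> i < m"
  obtains j where "i = m + j"
  using assms by (metis le_add_diff_inverse not_less)

lemma less_add_cases:
  fixes i m r :: nat
  assumes "i < m \<Longrightarrow> P" "\<And>k. i = m + k \<Longrightarrow> k < r \<Longrightarrow> P" "m + r \<le> i \<Longrightarrow> P"
  shows P
  using assms by (metis add_diff_inverse_nat nat_add_left_cancel_less not_less)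

lemma all_less_add_iff:
  fixes m r :: nat
  shows "(\<forall>i<m + r. P i) \<longleftrightarrow> (\<forall>i<m. P i) \<and> (\<forall>k<r. P (m + k))"
proof (intro iffI conjI allI impI)
  fix i assume "(\<forall>i<m. P i) \<and> (\<forall>k<r. P (m + k))" "i < m + r"
  then show "P i" by (cases "i < m") (auto elim: shifted_index)
qed simp_all

lemma all_less_3: "(\<forall>i<3::nat. P i) \<longleftrightarrow> P 0 \<and> P 1 \<and> P 2"
  by (auto simp: numeral_3_eq_3 numeral_2_eq_2 less_Suc_eq)

lemma poly_fn_diff: "poly_fn p \<Longrightarrow> poly_fn q \<Longrightarrow> poly_fn (\<lambda>x. p x - q x)"
  using poly_fn.add[OF _ poly_fn.mult[OF poly_fn.const[of "-1"]], of p q] by simp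

lemma poly_fn_sum:
  "finite A \<Longrightarrow> (\<And>i. i \<in> A \<Longrightarrow> poly_fn (f i)) \<Longrightarrow> poly_fn (\<lambda>x. \<Sum>i\<in>A. f i x)"
  by (induction A rule: finite_induct) (auto intro: poly_fn.intros)

lemma poly_fn_prod:
  "finite A \<Longrightarrow> (\<And>i. i \<in> A \<Longrightarrow> poly_fn (f i)) \<Longrightarrow> poly_fn (\<lambda>x. \<Prod>i\<in>A. f i x)"
  by (induction A rule: finite_induct) (auto intro: poly_fn.intros)

lemma poly_fn_sum_list:
  "(\<And>a. a \<in> set as \<Longrightarrow> poly_fn (f a)) \<Longrightarrow> poly_fn (\<lambda>x. \<Sum>a\<leftarrow>as. f a x)"
  by (induction as) (auto intro: poly_fn.intros)

lemma poly_fn_power: "poly_fn p \<Longrightarrow> poly_fn (\<lambda>x. p x ^ m)"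
  by (induction m) (auto intro: poly_fn.intros)

lemma poly_fn_compose:
  "poly_fn p \<Longrightarrow> (\<And>i. poly_fn (\<lambda>x. g x i)) \<Longrightarrow> poly_fn (\<lambda>x. p (g x))"
  by (induction rule: poly_fn.induct) (auto intro: poly_fn.intros)

lemma continuous_on_coordinate: "continuous_on S (\<lambda>x. x i :: real)"
  by (rule continuous_on_subset[OF continuous_on_product_coordinates subset_UNIV])

lemma continuous_on_poly_fn: "poly_fn p \<Longrightarrow> continuous_on S p"
  by (induction rule: poly_fn.induct) (auto intro: continuous_intros continuous_on_coordinate)

lemma semialg_subset_Rk: "semialg k S \<Longrightarrow> S \<subseteq> Rk k"
  by (induction rule: semialg.induct) auto

lemma semialg_conj:
  assumes "semialg k {x\<in>Rk k. P x}" "semialg k {x\<in>Rk k. Q x}"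
  shows "semialg k {x\<in>Rk k. P x \<and> Q x}"
proof -
  have "{x\<in>Rk k. P x \<and> Q x} = Rk k - ((Rk k - {x\<in>Rk k. P x}) \<union> (Rk k - {x\<in>Rk k. Q x}))"
    by auto
  then show ?thesis using assms by (simp only:) (intro semialg.compl semialg.union)
qed

lemma semialg_Rk: "semialg k {x\<in>Rk k. True}"
  using semialg.eq[OF poly_fn.const[of 0], of k] by simp

lemma semialg_all_less:
  "(\<And>i. i < (m::nat) \<Longrightarrow> semialg k {x\<in>Rk k. P i x}) \<Longrightarrow> semialg k {x\<in>Rk k. \<forall>i<m. P i x}"
proof (induction m)
  case 0 then show ?case using semialg_Rk by simp
next
  case (Suc m)
  have "{x\<in>Rk k. \<forall>i<Suc m. P i x} = {x\<in>Rk k. (\<forall>i<m. P i x) \<and> P m x}"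
    by (auto simp: less_Suc_eq)
  then show ?case using Suc by (simp add: semialg_conj)
qed

lemma semialg_all_list:
  "(\<And>a. a \<in> set as \<Longrightarrow> semialg k {x\<in>Rk k. P a x}) \<Longrightarrow> semialg k {x\<in>Rk k. \<forall>a\<in>set as. P a x}"
proof (induction as)
  case Nil then show ?case using semialg_Rk by simp
next
  case (Cons a as)
  have "{x\<in>Rk k. \<forall>b\<in>set (a # as). P b x} = {x\<in>Rk k. P a x \<and> (\<forall>b\<in>set as. P b x)}"
    by auto
  then show ?case using Cons by (simp add: semialg_conj)
qed

lemma semialg_less: "poly_fn p \<Longrightarrow> poly_fn q \<Longrightarrow> semialg k {x\<in>Rk k. p x < q x}"
  using semialg.gt[OF poly_fn_diff[of q p]] by simp

lemma semialg_eq: "poly_fn p \<Longrightarrow> poly_fn q \<Longrightarrow> semialg k {x\<in>Rk k. p x = q x}"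
  using semialg.eq[OF poly_fn_diff[of p q]] by simp

lemma semialg_preimage:
  assumes "semialg k S" and poly: "\<And>i. poly_fn (\<lambda>x. \<phi> x i)"
    and into: "\<And>x. x \<in> Rk m \<Longrightarrow> \<phi> x \<in> Rk k"
  shows "semialg m {x\<in>Rk m. \<phi> x \<in> S}"
  using assms(1)
proof (induction rule: semialg.induct)
  case (eq p)
  have "{x\<in>Rk m. \<phi> x \<in> {y\<in>Rk k. p y = 0}} = {x\<in>Rk m. p (\<phi> x) = 0}"
    using into by auto
  then show ?case using semialg.eq[OF poly_fn_compose[OF eq poly]] by simp
next
  case (gt p)
  have "{x\<in>Rk m. \<phi> x \<in> {y\<in>Rk k. p y > 0}} = {x\<in>Rk m. p (\<phi> x) > 0}"
    using into by auto
  then show ?case using semialg.gt[OF poly_fn_compose[OF gt poly]] by simp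
next
  case (union S T)
  have "{x\<in>Rk m. \<phi> x \<in> S \<union> T} = {x\<in>Rk m. \<phi> x \<in> S} \<union> {x\<in>Rk m. \<phi> x \<in> T}"
    by auto
  then show ?case using union by (simp add: semialg.union)
next
  case (compl S)
  have "{x\<in>Rk m. \<phi> x \<in> Rk k - S} = Rk m - {x\<in>Rk m. \<phi> x \<in> S}"
    using into by auto
  then show ?case using compl by (simp add: semialg.compl)
qed

definition trunc_coords :: "nat \<Rightarrow> (nat \<Rightarrow> real) \<Rightarrow> nat \<Rightarrow> real" where
  "trunc_coords k w = (\<lambda>i. if i < k then w i else 0)"

definition shift_coords :: "nat \<Rightarrow> (nat \<Rightarrow> real) \<Rightarrow> nat \<Rightarrow> real" where
  "shift_coords k w = (\<lambda>i. w (k + i))"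

lemma trunc_coords_in_Rk: "trunc_coords k w \<in> Rk k"
  by (simp add: trunc_coords_def Rk_def)

lemma shift_coords_in_Rk: "w \<in> Rk (k + m) \<Longrightarrow> shift_coords k w \<in> Rk m"
  by (simp add: shift_coords_def Rk_def)

lemma trunc_coords_join: "x \<in> Rk k \<Longrightarrow> trunc_coords k (join k x z) = x"
  by (auto simp: trunc_coords_def join_def Rk_def)

lemma shift_coords_join: "shift_coords k (join k x z) = z"
  by (simp add: shift_coords_def join_def)

lemma join_in_Rk: "x \<in> Rk k \<Longrightarrow> z \<in> Rk m \<Longrightarrow> join k x z \<in> Rk (k + m)"
  by (simp add: join_def Rk_def)

lemma join_trunc_shift: "w \<in> Rk (k + m) \<Longrightarrow> join k (trunc_coords k w) (shift_coords k w) = w"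
  by (auto simp: join_def trunc_coords_def shift_coords_def)

lemma poly_fn_trunc_coords: "poly_fn (\<lambda>w. trunc_coords k w i)"
  by (cases "i < k") (simp_all add: trunc_coords_def poly_fn.intros)

lemma poly_fn_shift_coords: "poly_fn (\<lambda>w. shift_coords k w i)"
  by (simp add: shift_coords_def poly_fn.coord)

lemma trunc_coords_trunc: "k \<le> m \<Longrightarrow> trunc_coords k (trunc_coords m w) = trunc_coords k w"
  by (auto simp: trunc_coords_def)

lemma cyl_eq: "cyl k W j = {x\<in>Rk (k + j). trunc_coords k x \<in> W}"
  by (simp add: cyl_def trunc_coords_def)

lemma semialg_trunc_preimage: "semialg k W \<Longrightarrow> semialg (k + j) {x\<in>Rk (k + j). trunc_coords k x \<in> W}"
  by (rule semialg_preimage) (auto simp: poly_fn_trunc_coords trunc_coords_in_Rk)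

lemma semialg_shift_preimage: "semialg m T \<Longrightarrow> semialg (k + m) {w\<in>Rk (k + m). shift_coords k w \<in> T}"
  by (rule semialg_preimage) (auto simp: poly_fn_shift_coords shift_coords_in_Rk)

lemma graph_eq_inverse_equations:
  assumes SR: "S \<subseteq> Rk k" and TR: "T \<subseteq> Rk m"
    and f: "\<And>x. x \<in> S \<Longrightarrow> f x \<in> T \<and> g (f x) = x"
    and g: "\<And>z. z \<in> T \<Longrightarrow> g z \<in> S \<and> f (g z) = z"
    and inverse_eqs: "\<And>x z. x \<in> Rk k \<Longrightarrow> z \<in> T \<Longrightarrow> x = g z \<longleftrightarrow> (\<forall>i<k. A i z * x i = B i z)"
  shows "{join k x (f x) | x. x \<in> S} = {w\<in>Rk (k + m). shift_coords k w \<in> T \<and>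
           (\<forall>i<k. A i (shift_coords k w) * trunc_coords k w i = B i (shift_coords k w))}"
    (is "_ = ?G")
proof (intro set_eqI iffI)
  fix w assume "w \<in> {join k x (f x) | x. x \<in> S}"
  then obtain x where x: "x \<in> S" and w: "w = join k x (f x)" by blast
  have "x = g (f x)" using f[OF x] by simp
  then show "w \<in> ?G"
    using x f[OF x] SR TR inverse_eqs[of x "f x"] join_in_Rk[of x k "f x" m]
    by (auto simp: w trunc_coords_join shift_coords_join)
next
  fix w assume w: "w \<in> ?G"
  then have z: "shift_coords k w \<in> T" and x: "trunc_coords k w = g (shift_coords k w)"
    using inverse_eqs[OF trunc_coords_in_Rk, of "shift_coords k w"] by auto
  have "w = join k (trunc_coords k w) (shift_coords k w)"
    using w join_trunc_shift[of w k m] by simp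
  then have "w = join k (trunc_coords k w) (f (trunc_coords k w))"
    using g[OF z] x by simp
  moreover have "trunc_coords k w \<in> S" using g[OF z] x by simp
  ultimately show "w \<in> {join k x (f x) | x. x \<in> S}" by (simp only: mem_Collect_eq) blast
qed

lemma stably_iso_by_inverse_equations:
  assumes S: "semialg k S" and T: "semialg m T"
    and cont: "continuous_on S f" "continuous_on T g"
    and f: "\<And>x. x \<in> S \<Longrightarrow> f x \<in> T \<and> g (f x) = x"
    and g: "\<And>z. z \<in> T \<Longrightarrow> g z \<in> S \<and> f (g z) = z"
    and poly: "\<And>i. poly_fn (A i)" "\<And>i. poly_fn (B i)"
    and inverse_eqs: "\<And>x z. x \<in> Rk k \<Longrightarrow> z \<in> T \<Longrightarrow> x = g z \<longleftrightarrow> (\<forall>i<k. A i z * x i = B i z)"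
  shows "stably_iso (k, S) (m, T)"
proof (intro stably_iso.iso, unfold semialg_iso_def, intro conjI exI)
  show "homeomorphism S T f g"
    unfolding homeomorphism_def using cont f g by (auto intro!: image_eqI)
  have "{join k x (f x) | x. x \<in> S} = {w\<in>Rk (k + m). shift_coords k w \<in> T \<and>
           (\<forall>i<k. A i (shift_coords k w) * trunc_coords k w i = B i (shift_coords k w))}"
    using semialg_subset_Rk[OF S] semialg_subset_Rk[OF T] f g inverse_eqs
    by (rule graph_eq_inverse_equations)
  also have "semialg (k + m) \<dots>"
  proof -
    have "poly_fn (\<lambda>w. A i (shift_coords k w))" "poly_fn (\<lambda>w. B i (shift_coords k w))" for i
      using poly by (auto intro: poly_fn_compose poly_fn_shift_coords)
    then show ?thesis
      by (intro semialg_conj semialg_shift_preimage[OF T] semialg_all_less semialg_eq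
          poly_fn.mult poly_fn_trunc_coords)
  qed
  finally show "semialg (k + m) {join k x (f x) | x. x \<in> S}" .
qed (use S T in auto)

section \<open>Parametrising positive pairs by \<open>u/v - v/u\<close>\<close>

definition diff_recip :: "real \<Rightarrow> real" where
  "diff_recip t = t - 1 / t"

definition diff_recip_inv :: "real \<Rightarrow> real" where
  "diff_recip_inv x = (x + sqrt (x\<^sup>2 + 4)) / 2"

lemma abs_less_sqrt_sq_plus_4: "\<bar>x\<bar> < sqrt (x\<^sup>2 + 4)"
  using real_sqrt_less_mono[of "x\<^sup>2" "x\<^sup>2 + 4"] by simp

lemma diff_recip_inv_pos: "0 < diff_recip_inv x"
  using abs_less_sqrt_sq_plus_4[of x] by (simp add: diff_recip_inv_def)

lemma diff_recip_diff_recip_inv: "diff_recip (diff_recip_inv x) = x"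
proof -
  let ?s = "sqrt (x\<^sup>2 + 4)"
  have pos: "0 < x + ?s" using abs_less_sqrt_sq_plus_4[of x] by linarith
  have "(?s - x) * (x + ?s) = 4" by (simp add: algebra_simps power2_eq_square[symmetric])
  then have "1 / diff_recip_inv x = (?s - x) / 2"
    using pos by (simp add: diff_recip_inv_def field_simps)
  then show ?thesis by (simp add: diff_recip_def diff_recip_inv_def field_simps)
qed

lemma diff_recip_inv_diff_recip: "0 < t \<Longrightarrow> diff_recip_inv (diff_recip t) = t"
proof -
  assume t: "0 < t"
  have "(t - 1 / t)\<^sup>2 + 4 = (t + 1 / t)\<^sup>2" using t by (simp add: power2_eq_square field_simps)
  then have "sqrt ((t - 1 / t)\<^sup>2 + 4) = t + 1 / t" using t by simp
  then show ?thesis by (simp add: diff_recip_def diff_recip_inv_def)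
qed

lemma continuous_on_diff_recip_inv [continuous_intros]:
  "continuous_on S g \<Longrightarrow> continuous_on S (\<lambda>x. diff_recip_inv (g x))"
  unfolding diff_recip_inv_def by (intro continuous_intros) auto

lemma diff_recip_ratio_iff:
  "0 < u \<Longrightarrow> 0 < v \<Longrightarrow> x = diff_recip (u / v) \<longleftrightarrow> x * (u * v) = u\<^sup>2 - v\<^sup>2"
  by (auto simp: diff_recip_def field_simps power2_eq_square)

text \<open>A pair \<open>u, v > 0\<close> with \<open>u + v = s\<close> is determined by \<open>diff_recip (u / v)\<close>, which can
  take any real value.\<close>

lemma split_by_ratio:
  fixes s x :: real
  defines "G \<equiv> diff_recip_inv x"
  assumes "0 < s"
  shows "0 < s * G / (1 + G)" "0 < s / (1 + G)" "s * G / (1 + G) + s / (1 + G) = s"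
    and "diff_recip ((s * G / (1 + G)) / (s / (1 + G))) = x"
proof -
  have G: "0 < G" unfolding G_def by (rule diff_recip_inv_pos)
  then show "0 < s * G / (1 + G)" "0 < s / (1 + G)" using assms(2) by auto
  have "s * G / (1 + G) + s / (1 + G) = s * (G + 1) / (1 + G)"
    by (simp add: add_divide_distrib distrib_left)
  then show "s * G / (1 + G) + s / (1 + G) = s" using G by (simp add: add.commute)
  have "s * G / (1 + G) = G * (s / (1 + G))" by simp
  then have "(s * G / (1 + G)) / (s / (1 + G)) = G" using G assms(2) by simp
  then show "diff_recip ((s * G / (1 + G)) / (s / (1 + G))) = x"
    by (simp add: G_def diff_recip_diff_recip_inv)
qed

lemma split_of_ratio:
  fixes u v :: real
  assumes "0 < u" "0 < v"
  shows "(u + v) * (u / v) / (1 + u / v) = u" "(u + v) / (1 + u / v) = v"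
proof -
  have "1 + u / v = (u + v) / v" using assms by (simp add: field_simps)
  then show "(u + v) * (u / v) / (1 + u / v) = u" "(u + v) / (1 + u / v) = v"
    using assms by simp_all
qed

section \<open>Expressions and the homogenising substitution\<close>

datatype expr = Cst real | Var nat | Add expr expr | Mul expr expr

primrec expr_val :: "expr \<Rightarrow> (nat \<Rightarrow> real) \<Rightarrow> real" where
  "expr_val (Cst c) z = c"
| "expr_val (Var i) z = z i"
| "expr_val (Add e1 e2) z = expr_val e1 z + expr_val e2 z"
| "expr_val (Mul e1 e2) z = expr_val e1 z * expr_val e2 z"

primrec expr_vars :: "expr \<Rightarrow> nat set" where
  "expr_vars (Cst c) = {}"
| "expr_vars (Var i) = {i}"
| "expr_vars (Add e1 e2) = expr_vars e1 \<union> expr_vars e2"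
| "expr_vars (Mul e1 e2) = expr_vars e1 \<union> expr_vars e2"

primrec expr_bound :: "expr \<Rightarrow> real" where
  "expr_bound (Cst c) = \<bar>c\<bar> + 1"
| "expr_bound (Var i) = 1"
| "expr_bound (Add e1 e2) = expr_bound e1 + expr_bound e2"
| "expr_bound (Mul e1 e2) = expr_bound e1 * expr_bound e2"

primrec expr_trunc :: "nat \<Rightarrow> expr \<Rightarrow> expr" where
  "expr_trunc k (Cst c) = Cst c"
| "expr_trunc k (Var i) = (if i < k then Var i else Cst 0)"
| "expr_trunc k (Add e1 e2) = Add (expr_trunc k e1) (expr_trunc k e2)"
| "expr_trunc k (Mul e1 e2) = Mul (expr_trunc k e1) (expr_trunc k e2)"

lemma expr_val_cong: "(\<And>i. i \<in> expr_vars e \<Longrightarrow> z i = z' i) \<Longrightarrow> expr_val e z = expr_val e z'"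
  by (induction e) auto

lemma poly_fn_expr_val: "poly_fn (expr_val e)"
proof (induction e)
  case (Cst c) show ?case using poly_fn.const[of c] by (simp add: expr_val_def)
next
  case (Var i) show ?case using poly_fn.coord[of i] by (simp add: expr_val_def)
next
  case (Add e1 e2) then show ?case using poly_fn.add by force
next
  case (Mul e1 e2) then show ?case using poly_fn.mult by force
qed

lemma poly_fn_obtain_expr: "poly_fn p \<Longrightarrow> \<exists>e. p = expr_val e"
proof (induction rule: poly_fn.induct)
  case (const c) then show ?case by (metis expr_val.simps(1))
next
  case (coord i) then show ?case by (metis expr_val.simps(2))
next
  case (add p q) then show ?case by (metis expr_val.simps(3))
next
  case (mult p q) then show ?case by (metis expr_val.simps(4))
qed

lemma expr_val_trunc: "expr_val (expr_trunc k e) z = expr_val e (trunc_coords k z)"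
  by (induction e) (auto simp: trunc_coords_def)

lemma expr_vars_trunc: "expr_vars (expr_trunc k e) \<subseteq> {..<k}"
  by (induction e) auto

lemma abs_expr_val_less_bound:
  "(\<And>i. i \<in> expr_vars e \<Longrightarrow> \<bar>z i\<bar> < 1) \<Longrightarrow> \<bar>expr_val e z\<bar> < expr_bound e"
proof (induction e)
  case (Add e1 e2)
  then show ?case using abs_triangle_ineq[of "expr_val e1 z" "expr_val e2 z"] by fastforce
next
  case (Mul e1 e2)
  then show ?case by (auto simp: abs_mult intro!: mult_strict_mono)
qed auto

lemma expr_bound_ge_1: "1 \<le> expr_bound e"
  by (induction e) (auto intro: order.trans[OF _ mult_mono, of 1 1 1])

text \<open>Substituting \<open>x_j = z_j / z_(n+j) - z_(n+j) / z_j\<close> and clearing denominators with a power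
  of \<open>pair_prod\<close> turns a polynomial in \<open>x\<close> into one in \<open>z\<close>.\<close>

definition ratio_coords :: "nat \<Rightarrow> (nat \<Rightarrow> real) \<Rightarrow> nat \<Rightarrow> real" where
  "ratio_coords n z = (\<lambda>j. if j < n then diff_recip (z j / z (n + j)) else 0)"

definition pair_prod :: "nat \<Rightarrow> (nat \<Rightarrow> real) \<Rightarrow> real" where
  "pair_prod n z = (\<Prod>k<n. z k * z (n + k))"

definition positive_pairs :: "nat \<Rightarrow> (nat \<Rightarrow> real) \<Rightarrow> bool" where
  "positive_pairs n z \<longleftrightarrow> (\<forall>j<n. 0 < z j \<and> 0 < z (n + j))"

definition homogenization ::
  "nat \<Rightarrow> nat \<Rightarrow> ((nat \<Rightarrow> real) \<Rightarrow> real) \<Rightarrow> ((nat \<Rightarrow> real) \<Rightarrow> real) \<Rightarrow> bool" where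
  "homogenization n d q p \<longleftrightarrow>
     poly_fn q \<and> (\<forall>z. positive_pairs n z \<longrightarrow> q z = pair_prod n z ^ d * p (ratio_coords n z))"

lemma pair_prod_pos: "positive_pairs n z \<Longrightarrow> 0 < pair_prod n z"
  unfolding pair_prod_def positive_pairs_def by (intro prod_pos) auto

lemma poly_fn_pair_prod: "poly_fn (pair_prod n)"
  unfolding pair_prod_def by (intro poly_fn_prod poly_fn.mult poly_fn.coord) simp

lemma homogenization_coord:
  assumes "i < n"
  shows "homogenization n 1 (\<lambda>z. (z i ^ 2 - z (n + i) ^ 2) * (\<Prod>k\<in>{..<n} - {i}. z k * z (n + k))) (\<lambda>x. x i)"
  unfolding homogenization_def
proof (intro conjI allI impI)
  show "poly_fn (\<lambda>z. (z i ^ 2 - z (n + i) ^ 2) * (\<Prod>k\<in>{..<n} - {i}. z k * z (n + k)))"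
    by (intro poly_fn.mult poly_fn_diff poly_fn_power poly_fn_prod poly_fn.coord) auto
  fix z assume "positive_pairs n z"
  then have z: "0 < z i" "0 < z (n + i)" using assms by (auto simp: positive_pairs_def)
  let ?P = "\<Prod>k\<in>{..<n} - {i}. z k * z (n + k)"
  have "pair_prod n z = (z i * z (n + i)) * ?P"
    unfolding pair_prod_def using assms by (simp add: prod.remove)
  then have "pair_prod n z ^ 1 * ratio_coords n z i = (ratio_coords n z i * (z i * z (n + i))) * ?P"
    by (simp only: power_one_right mult_ac)
  also have "ratio_coords n z i * (z i * z (n + i)) = z i ^ 2 - z (n + i) ^ 2"
    using diff_recip_ratio_iff[OF z, of "diff_recip (z i / z (n + i))"] assms
    by (simp add: ratio_coords_def)
  finally show "(z i ^ 2 - z (n + i) ^ 2) * ?P = pair_prod n z ^ 1 * ratio_coords n z i" ..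
qed

lemma homogenization_add:
  assumes "homogenization n d1 q1 p1" "homogenization n d2 q2 p2"
  shows "homogenization n (max d1 d2)
    (\<lambda>z. pair_prod n z ^ (max d1 d2 - d1) * q1 z + pair_prod n z ^ (max d1 d2 - d2) * q2 z)
    (\<lambda>x. p1 x + p2 x)"
proof -
  have "pair_prod n z ^ (max d1 d2 - d1) * pair_prod n z ^ d1 = pair_prod n z ^ max d1 d2"
    "pair_prod n z ^ (max d1 d2 - d2) * pair_prod n z ^ d2 = pair_prod n z ^ max d1 d2" for z
    by (simp_all add: power_add[symmetric])
  then show ?thesis using assms
    by (auto simp: homogenization_def algebra_simps intro!: poly_fn.intros poly_fn_power poly_fn_pair_prod)
qed

lemma homogenization_mult:
  "homogenization n d1 q1 p1 \<Longrightarrow> homogenization n d2 q2 p2 \<Longrightarrow>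
    homogenization n (d1 + d2) (\<lambda>z. q1 z * q2 z) (\<lambda>x. p1 x * p2 x)"
  by (auto simp: homogenization_def power_add intro: poly_fn.mult)

lemma homogenize: "poly_fn p \<Longrightarrow> \<exists>d q. homogenization n d q p"
proof (induction rule: poly_fn.induct)
  case (const c)
  have "homogenization n 0 (\<lambda>z. c) (\<lambda>x. c)" by (simp add: homogenization_def poly_fn.const)
  then show ?case by blast
next
  case (coord i)
  have "homogenization n 0 (\<lambda>z. 0) (\<lambda>x. x i)" if "\<not> i < n"
    using that by (simp add: homogenization_def poly_fn.const ratio_coords_def)
  then show ?case using homogenization_coord by blast
next
  case (add p1 p2)
  then show ?case using homogenization_add by blast
next
  case (mult p1 p2)
  then show ?case using homogenization_mult by blast
qed

lemma homogenized_expr: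
  fixes n :: nat
  assumes "poly_fn p"
  obtains E d where "expr_vars E \<subseteq> {..<2 * n}"
    and "\<And>z. positive_pairs n z \<Longrightarrow> expr_val E z = pair_prod n z ^ d * p (ratio_coords n z)"
proof -
  obtain d q where q: "homogenization n d q p" using homogenize[OF assms] by blast
  obtain e where e: "q = expr_val e" using poly_fn_obtain_expr q by (auto simp: homogenization_def)
  have trunc: "pair_prod n (trunc_coords (2 * n) z) = pair_prod n z"
    "ratio_coords n (trunc_coords (2 * n) z) = ratio_coords n z"
    "positive_pairs n (trunc_coords (2 * n) z) = positive_pairs n z" for z :: "nat \<Rightarrow> real"
    by (auto simp: pair_prod_def ratio_coords_def trunc_coords_def positive_pairs_def intro!: prod.cong)
  show ?thesis
  proof
    show "expr_vars (expr_trunc (2 * n) e) \<subseteq> {..<2 * n}" by (rule expr_vars_trunc)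
    show "expr_val (expr_trunc (2 * n) e) z = pair_prod n z ^ d * p (ratio_coords n z)"
      if "positive_pairs n z" for z
      using q that by (simp add: homogenization_def expr_val_trunc e[symmetric] trunc)
  qed
qed

section \<open>Arithmetic circuits as systems of bilinear equations\<close>

primrec num_nodes :: "expr \<Rightarrow> nat" where
  "num_nodes (Cst c) = 1"
| "num_nodes (Var i) = 1"
| "num_nodes (Add e1 e2) = Suc (num_nodes e1 + num_nodes e2)"
| "num_nodes (Mul e1 e2) = Suc (num_nodes e1 + num_nodes e2)"

lemma num_nodes_pos: "0 < num_nodes e"
  by (cases e) simp_all

primrec node_list :: "expr \<Rightarrow> nat \<Rightarrow> (nat \<times> expr) list" where
  "node_list (Cst c) p = [(p, Cst c)]"
| "node_list (Var i) p = [(p, Var i)]"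
| "node_list (Add e1 e2) p = (p, Add e1 e2) # node_list e1 (Suc p) @ node_list e2 (Suc p + num_nodes e1)"
| "node_list (Mul e1 e2) p = (p, Mul e1 e2) # node_list e1 (Suc p) @ node_list e2 (Suc p + num_nodes e1)"

lemma map_fst_node_list: "map fst (node_list e p) = [p..<p + num_nodes e]"
proof (induction e arbitrary: p)
  case (Add e1 e2)
  then show ?case
    using upt_add_eq_append[of "Suc p" "Suc (p + num_nodes e1)" "num_nodes e2"]
    by (simp add: upt_conv_Cons add.assoc del: upt_Suc)
next
  case (Mul e1 e2)
  then show ?case
    using upt_add_eq_append[of "Suc p" "Suc (p + num_nodes e1)" "num_nodes e2"]
    by (simp add: upt_conv_Cons add.assoc del: upt_Suc)
qed simp_all

lemma distinct_node_positions: "distinct (map fst (node_list e p))"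
  by (simp add: map_fst_node_list)

lemma node_positions: "fst ` set (node_list e p) = {p..<p + num_nodes e}"
  using arg_cong[OF map_fst_node_list, of set e p] by simp

lemma node_position_less: "(q, f) \<in> set (node_list e p) \<Longrightarrow> p \<le> q \<and> q < p + num_nodes e"
  using node_positions[of e p] by force

lemma root_in_node_list: "(p, e) \<in> set (node_list e p)"
  by (cases e) simp_all

lemma node_list_children:
  "(q, f) \<in> set (node_list e p) \<Longrightarrow> f = Add l r \<or> f = Mul l r \<Longrightarrow>
    (Suc q, l) \<in> set (node_list e p) \<and> (Suc q + num_nodes l, r) \<in> set (node_list e p)"
  by (induction e arbitrary: p) (auto simp: root_in_node_list)

lemma node_list_vars: "(q, f) \<in> set (node_list e p) \<Longrightarrow> expr_vars f \<subseteq> expr_vars e"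
  by (induction e arbitrary: p) fastforce+

lemma node_list_bound: "(q, f) \<in> set (node_list e p) \<Longrightarrow> expr_bound f \<le> expr_bound e"
proof (induction e arbitrary: p)
  case (Add e1 e2)
  then show ?case using expr_bound_ge_1[of e1] expr_bound_ge_1[of e2] by force
next
  case (Mul e1 e2)
  have "expr_bound e1 \<le> expr_bound e1 * expr_bound e2" "expr_bound e2 \<le> expr_bound e1 * expr_bound e2"
    using expr_bound_ge_1[of e1] expr_bound_ge_1[of e2]
    by (simp_all add: mult_le_cancel_left1 mult_le_cancel_right1)
  with Mul show ?case by force
qed simp_all

definition computes :: "real \<Rightarrow> real \<Rightarrow> expr \<Rightarrow> nat \<Rightarrow> (nat \<Rightarrow> real) \<Rightarrow> bool" where
  "computes a b e p z \<longleftrightarrow> (\<forall>(q, f)\<in>set (node_list e p). z q = a * expr_val f z + b)"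

lemma computes_root: "computes a b e p z \<Longrightarrow> z p = a * expr_val e z + b"
  using root_in_node_list by (fastforce simp: computes_def)

lemma computes_unique:
  assumes "computes a b e p z" "computes a b e p z'" "\<And>i. i \<in> expr_vars e \<Longrightarrow> z i = z' i"
    and "q \<in> {p..<p + num_nodes e}"
  shows "z q = z' q"
proof -
  obtain f where f: "(q, f) \<in> set (node_list e p)" using assms(4) node_positions by force
  have "expr_val f z = expr_val f z'"
    using node_list_vars[OF f] assms(3) by (intro expr_val_cong) auto
  then show ?thesis using f assms(1,2) by (fastforce simp: computes_def)
qed

lemma computes_cong:
  assumes "\<And>i. i \<in> expr_vars e \<union> {p..<p + num_nodes e} \<Longrightarrow> z i = z' i"
  shows "computes a b e p z \<longleftrightarrow> computes a b e p z'"
proof -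
  have "z q = z' q \<and> expr_val f z = expr_val f z'" if "(q, f) \<in> set (node_list e p)" for q f
    using assms node_list_vars[OF that] node_position_less[OF that] by (auto intro: expr_val_cong)
  then show ?thesis unfolding computes_def by fastforce
qed

lemma computes_bounds:
  assumes "computes (\<epsilon> / (2 * K)) (\<epsilon> / 2) e p z" "\<And>i. i \<in> expr_vars e \<Longrightarrow> \<bar>z i\<bar> < 1"
    and "expr_bound e \<le> K" "0 < \<epsilon>" "q \<in> {p..<p + num_nodes e}"
  shows "0 < z q \<and> z q < \<epsilon>"
proof -
  obtain f where f: "(q, f) \<in> set (node_list e p)" using assms(5) node_positions by force
  have K: "0 < K" using expr_bound_ge_1[of e] assms(3) by linarith
  have "\<bar>expr_val f z\<bar> < K"
    using abs_expr_val_less_bound[of f z] node_list_vars[OF f] node_list_bound[OF f] assms(2,3) by force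
  then have "\<bar>\<epsilon> / (2 * K) * expr_val f z\<bar> < \<epsilon> / 2"
    using K assms(4) by (simp add: abs_mult field_simps)
  moreover have "z q = \<epsilon> / (2 * K) * expr_val f z + \<epsilon> / 2"
    using assms(1) f by (auto simp: computes_def)
  ultimately show ?thesis by linarith
qed

definition fill_nodes :: "real \<Rightarrow> real \<Rightarrow> expr \<Rightarrow> nat \<Rightarrow> (nat \<Rightarrow> real) \<Rightarrow> nat \<Rightarrow> real" where
  "fill_nodes a b e p z =
     (\<lambda>q. case map_of (node_list e p) q of None \<Rightarrow> z q | Some f \<Rightarrow> a * expr_val f z + b)"

lemma fill_nodes_outside: "q \<notin> {p..<p + num_nodes e} \<Longrightarrow> fill_nodes a b e p z q = z q"
proof -
  assume "q \<notin> {p..<p + num_nodes e}"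
  then have "map_of (node_list e p) q = None" by (simp add: map_of_eq_None_iff node_positions)
  then show ?thesis by (simp add: fill_nodes_def)
qed

lemma computes_fill_nodes:
  assumes "expr_vars e \<subseteq> {..<p}"
  shows "computes a b e p (fill_nodes a b e p z)"
  unfolding computes_def
proof clarify
  fix q f assume f: "(q, f) \<in> set (node_list e p)"
  have "expr_val f (fill_nodes a b e p z) = expr_val f z"
    using node_list_vars[OF f] assms by (intro expr_val_cong fill_nodes_outside) auto
  moreover have "map_of (node_list e p) q = Some f"
    using f distinct_node_positions by (rule map_of_is_SomeI[rotated])
  ultimately show "fill_nodes a b e p z q = a * expr_val f (fill_nodes a b e p z) + b"
    by (simp add: fill_nodes_def)
qed

lemma continuous_on_fill_nodes:
  assumes "continuous_on S zf"
  shows "continuous_on S (\<lambda>x. fill_nodes a b e p (zf x))"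
proof (rule continuous_on_coordinatewise_then_product)
  fix q
  have coord: "continuous_on S (\<lambda>x. zf x i)" for i
    by (rule continuous_on_product_then_coordinatewise[OF assms])
  have val: "continuous_on S (\<lambda>x. a * expr_val f (zf x) + b)" for f
    by (intro continuous_intros
        continuous_on_compose2[OF continuous_on_poly_fn[OF poly_fn_expr_val] assms subset_UNIV])
  show "continuous_on S (\<lambda>x. fill_nodes a b e p (zf x) q)"
    unfolding fill_nodes_def by (cases "map_of (node_list e p) q") (simp_all add: coord val)
qed

type_synonym bilin = "real \<times> (real \<times> nat) list \<times> (real \<times> nat \<times> nat) list"

fun bilin_val :: "bilin \<Rightarrow> (nat \<Rightarrow> real) \<Rightarrow> real" where
  "bilin_val (c, L, B) z = c + (\<Sum>(w, i)\<leftarrow>L. w * z i) + (\<Sum>(w, i, j)\<leftarrow>B. w * z i * z j)"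

fun bilin_wf :: "nat \<Rightarrow> bilin \<Rightarrow> bool" where
  "bilin_wf M (c, L, B) \<longleftrightarrow>
     (\<forall>(w, i)\<in>set L. i < 2 * M) \<and> (\<forall>(w, i, j)\<in>set B. i < M \<and> M \<le> j \<and> j < 2 * M)"

lemma poly_fn_bilin_val: "poly_fn (bilin_val e)"
proof -
  obtain c L B where e: "e = (c, L, B)" by (cases e)
  have "poly_fn (\<lambda>z. \<Sum>(w, i)\<leftarrow>L. w * z i)" "poly_fn (\<lambda>z. \<Sum>(w, i, j)\<leftarrow>B. w * z i * z j)"
    by (auto simp: case_prod_beta intro!: poly_fn_sum_list poly_fn.intros)
  then have "poly_fn (\<lambda>z. c + (\<Sum>(w, i)\<leftarrow>L. w * z i) + (\<Sum>(w, i, j)\<leftarrow>B. w * z i * z j))"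
    by (intro poly_fn.add poly_fn.const)
  moreover have "bilin_val e = (\<lambda>z. c + (\<Sum>(w, i)\<leftarrow>L. w * z i) + (\<Sum>(w, i, j)\<leftarrow>B. w * z i * z j))"
    unfolding e by (rule ext) simp
  ultimately show ?thesis by simp
qed

lemma bilin_val_cong:
  assumes "bilin_wf M e" "\<And>i. i < 2 * M \<Longrightarrow> z i = z' i"
  shows "bilin_val e z = bilin_val e z'"
proof -
  obtain c L B where e: "e = (c, L, B)" by (cases e)
  have "(\<Sum>(w, i)\<leftarrow>L. w * z i) = (\<Sum>(w, i)\<leftarrow>L. w * z' i)"
    "(\<Sum>(w, i, j)\<leftarrow>B. w * z i * z j) = (\<Sum>(w, i, j)\<leftarrow>B. w * z' i * z' j)"
    using assms unfolding e by (auto intro!: arg_cong[where f = sum_list] map_cong)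
  then show ?thesis unfolding e by simp
qed

text \<open>If the children of a product node hold \<open>a v\<^sub>1 + b\<close> and \<open>a v\<^sub>2 + b\<close>, the equation of the node is
  \<open>a (z\<^sub>q - (a v\<^sub>1 v\<^sub>2 + b)) = 0\<close> expanded. Its second factor is read from the copy at offset \<open>M\<close>,
  so that every quadratic term couples a coordinate below \<open>M\<close> with one in \<open>[M, 2M)\<close>.\<close>

fun node_eq :: "real \<Rightarrow> real \<Rightarrow> nat \<Rightarrow> nat \<times> expr \<Rightarrow> bilin" where
  "node_eq a b M (q, Cst c) = (- (a * c + b), [(1, q)], [])"
| "node_eq a b M (q, Var i) = (- b, [(1, q), (- a, i)], [])"
| "node_eq a b M (q, Add f1 f2) = (b, [(1, q), (- 1, Suc q), (- 1, Suc q + num_nodes f1)], [])"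
| "node_eq a b M (q, Mul f1 f2) =
     (- (a * b) - b * b, [(a, q), (b, Suc q), (b, M + (Suc q + num_nodes f1))],
      [(- 1, Suc q, M + (Suc q + num_nodes f1))])"

definition circuit_eqs :: "real \<Rightarrow> real \<Rightarrow> nat \<Rightarrow> expr \<Rightarrow> nat \<Rightarrow> bilin list" where
  "circuit_eqs a b M e p = map (node_eq a b M) (node_list e p)"

lemma node_eq_iff:
  assumes "a \<noteq> 0"
    and children: "\<And>f1 f2. f = Add f1 f2 \<or> f = Mul f1 f2 \<Longrightarrow>
       z (Suc q) = a * expr_val f1 z + b \<and> z (Suc q + num_nodes f1) = a * expr_val f2 z + b"
    and copy: "\<And>f1 f2. f = Mul f1 f2 \<Longrightarrow> z (M + (Suc q + num_nodes f1)) = z (Suc q + num_nodes f1)"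
  shows "bilin_val (node_eq a b M (q, f)) z = 0 \<longleftrightarrow> z q = a * expr_val f z + b"
proof (cases f)
  case (Add f1 f2)
  then show ?thesis using children[of f1 f2] by (auto simp: algebra_simps)
next
  case (Mul f1 f2)
  then have "bilin_val (node_eq a b M (q, f)) z = a * (z q - (a * expr_val f z + b))"
    using children[of f1 f2] copy[of f1 f2] by (simp add: algebra_simps)
  then show ?thesis using assms(1) by simp
qed (auto simp: algebra_simps)

lemma node_eq_in_node_list_iff:
  assumes "a \<noteq> 0" and copy: "\<And>q. q \<in> {p..<p + num_nodes e} \<Longrightarrow> z (M + q) = z q"
    and f: "(q, f) \<in> set (node_list e p)"
    and children: "\<And>f1 f2. f = Add f1 f2 \<or> f = Mul f1 f2 \<Longrightarrow>
       z (Suc q) = a * expr_val f1 z + b \<and> z (Suc q + num_nodes f1) = a * expr_val f2 z + b"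
  shows "bilin_val (node_eq a b M (q, f)) z = 0 \<longleftrightarrow> z q = a * expr_val f z + b"
proof (rule node_eq_iff[OF assms(1) children])
  fix f1 f2 assume "f = Mul f1 f2"
  then have "(Suc q + num_nodes f1, f2) \<in> set (node_list e p)"
    using node_list_children[OF f] by blast
  then have "Suc q + num_nodes f1 \<in> {p..<p + num_nodes e}"
    using node_position_less by auto
  then show "z (M + (Suc q + num_nodes f1)) = z (Suc q + num_nodes f1)"
    by (rule copy)
qed

lemma computes_of_circuit_eqs:
  assumes "a \<noteq> 0" "\<And>q. q \<in> {p..<p + num_nodes e} \<Longrightarrow> z (M + q) = z q"
    and eqs: "\<forall>eq\<in>set (circuit_eqs a b M e p). bilin_val eq z = 0"
  shows "computes a b e p z"
proof -
  have step: "z q = a * expr_val f z + b"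
    if "(q, f) \<in> set (node_list e p)"
      and "\<And>f1 f2. f = Add f1 f2 \<or> f = Mul f1 f2 \<Longrightarrow>
         z (Suc q) = a * expr_val f1 z + b \<and> z (Suc q + num_nodes f1) = a * expr_val f2 z + b"
    for q f
    using node_eq_in_node_list_iff[where M = M and z = z, OF assms(1,2) that] eqs that(1)
    by (auto simp: circuit_eqs_def)
  have "(q, f) \<in> set (node_list e p) \<Longrightarrow> z q = a * expr_val f z + b" for q f
  proof (induction f arbitrary: q)
    case (Cst c)
    then show ?case by (rule step) simp
  next
    case (Var i)
    then show ?case by (rule step) simp
  next
    case (Add f1 f2)
    then show ?case using node_list_children[OF Add.prems, of f1 f2] by (intro step) auto
  next
    case (Mul f1 f2)
    then show ?case using node_list_children[OF Mul.prems, of f1 f2] by (intro step) auto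
  qed
  then show ?thesis by (auto simp: computes_def)
qed

lemma circuit_eqs_of_computes:
  assumes "a \<noteq> 0" "\<And>q. q \<in> {p..<p + num_nodes e} \<Longrightarrow> z (M + q) = z q"
    and "computes a b e p z"
  shows "\<forall>eq\<in>set (circuit_eqs a b M e p). bilin_val eq z = 0"
proof
  have vals: "z q = a * expr_val f z + b" if "(q, f) \<in> set (node_list e p)" for q f
    using that assms(3) by (auto simp: computes_def)
  fix eq assume "eq \<in> set (circuit_eqs a b M e p)"
  then obtain q f where f: "(q, f) \<in> set (node_list e p)" and eq: "eq = node_eq a b M (q, f)"
    by (auto simp: circuit_eqs_def)
  have "bilin_val (node_eq a b M (q, f)) z = 0 \<longleftrightarrow> z q = a * expr_val f z + b"
  proof (rule node_eq_in_node_list_iff[where M = M and z = z, OF assms(1,2) f])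
    fix f1 f2 assume "f = Add f1 f2 \<or> f = Mul f1 f2"
    then show "z (Suc q) = a * expr_val f1 z + b \<and> z (Suc q + num_nodes f1) = a * expr_val f2 z + b"
      using node_list_children[OF f] vals by blast
  qed
  then show "bilin_val eq z = 0" using vals[OF f] eq by simp
qed

lemma circuit_eqs_iff_computes:
  assumes "a \<noteq> 0" "\<And>q. q \<in> {p..<p + num_nodes e} \<Longrightarrow> z (M + q) = z q"
  shows "(\<forall>eq\<in>set (circuit_eqs a b M e p). bilin_val eq z = 0) \<longleftrightarrow> computes a b e p z"
  using computes_of_circuit_eqs[where M = M and z = z, OF assms]
    circuit_eqs_of_computes[where M = M and z = z, OF assms] by blast

lemma circuit_eqs_wf:
  assumes "expr_vars e \<subseteq> {..<M}" "p + num_nodes e \<le> M" "eq \<in> set (circuit_eqs a b M e p)"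
  shows "bilin_wf M eq"
proof -
  obtain q f where f: "(q, f) \<in> set (node_list e p)" and eq: "eq = node_eq a b M (q, f)"
    using assms(3) by (auto simp: circuit_eqs_def)
  have pos: "q < M" using node_position_less[OF f] assms(2) by simp
  have vars: "expr_vars f \<subseteq> {..<M}" using node_list_vars[OF f] assms(1) by blast
  have children: "Suc q < M \<and> Suc q + num_nodes f1 < M" if "f = Add f1 f2 \<or> f = Mul f1 f2" for f1 f2
    using node_list_children[OF f that] node_position_less assms(2) by fastforce
  show ?thesis
    using pos vars children unfolding eq by (cases f) auto
qed

section \<open>Games whose payoffs are sums of monomials\<close>

lemma profiles_0: "profiles 0 d = {\<lambda>_. 0}"
  by (auto simp: profiles_def)

lemma profiles_Suc:
  "profiles (Suc N) d = (\<lambda>(s, j). s(N := j)) ` (profiles N d \<times> {..d N})"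
proof (intro set_eqI iffI)
  fix s assume s: "s \<in> profiles (Suc N) d"
  then have "(s(N := 0), s N) \<in> profiles N d \<times> {..d N}" by (auto simp: profiles_def)
  moreover have "s = (\<lambda>(s, j). s(N := j)) (s(N := 0), s N)" by simp
  ultimately show "s \<in> (\<lambda>(s, j). s(N := j)) ` (profiles N d \<times> {..d N})" by blast
qed (auto simp: profiles_def less_Suc_eq)

lemma inj_on_profiles_Suc: "inj_on (\<lambda>(s, j). s(N := j)) (profiles N d \<times> {..d N})"
proof (rule inj_onI, clarify)
  fix s j s' j' assume s: "s \<in> profiles N d" "s' \<in> profiles N d" and eq: "s(N := j) = s'(N := j')"
  have "s l = s' l" for l
    using s fun_cong[OF eq, of l] by (cases "l = N") (auto simp: profiles_def)
  then show "s = s' \<and> j = j'" using fun_cong[OF eq, of N] by auto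
qed

lemma finite_profiles: "finite (profiles N d)"
  by (induction N) (auto simp: profiles_0 profiles_Suc)

lemma sum_profiles_prod:
  "(\<Sum>s\<in>profiles N d. \<Prod>l<N. G l (s l)) = (\<Prod>l<N. \<Sum>j\<le>d l. G l j :: real)"
proof (induction N)
  case 0 then show ?case by (simp add: profiles_0)
next
  case (Suc N)
  have "(\<Sum>s\<in>profiles (Suc N) d. \<Prod>l<Suc N. G l (s l))
      = (\<Sum>s\<in>profiles N d. \<Sum>j\<le>d N. \<Prod>l<Suc N. G l ((s(N := j)) l))"
    unfolding profiles_Suc sum.reindex[OF inj_on_profiles_Suc] sum.cartesian_product
    by (simp add: case_prod_beta)
  also have "\<dots> = (\<Sum>s\<in>profiles N d. \<Sum>j\<le>d N. (\<Prod>l<N. G l (s l)) * G N j)"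
  proof (intro sum.cong refl)
    fix s j
    have "(\<Prod>l<N. G l ((s(N := j)) l)) = (\<Prod>l<N. G l (s l))" by (intro prod.cong) auto
    then show "(\<Prod>l<Suc N. G l ((s(N := j)) l)) = (\<Prod>l<N. G l (s l)) * G N j" by simp
  qed
  also have "\<dots> = (\<Sum>s\<in>profiles N d. \<Prod>l<N. G l (s l)) * (\<Sum>j\<le>d N. G N j)"
    by (rule sum_product[symmetric])
  finally show ?case using Suc by simp
qed

lemma sum_profiles_fixed:
  assumes "i < N" "j \<le> d i"
  shows "(\<Sum>s\<in>{s\<in>profiles N d. s i = j}. \<Prod>l\<in>{..<N} - {i}. F l (s l))
       = (\<Prod>l\<in>{..<N} - {i}. \<Sum>j'\<le>d l. F l j' :: real)"
proof -
  define G where "G l = (if l = i then (\<lambda>j'. of_bool (j' = j)) else F l)" for l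
  have G_prod: "(\<Prod>l<N. H l (G l)) = H i (G i) * (\<Prod>l\<in>{..<N} - {i}. H l (F l))"
    for H :: "nat \<Rightarrow> (nat \<Rightarrow> real) \<Rightarrow> real"
  proof -
    have "(\<Prod>l\<in>{..<N} - {i}. H l (G l)) = (\<Prod>l\<in>{..<N} - {i}. H l (F l))"
      by (intro prod.cong) (auto simp: G_def)
    then show ?thesis using assms(1) by (simp add: prod.remove)
  qed
  have "(\<Sum>s\<in>{s\<in>profiles N d. s i = j}. \<Prod>l\<in>{..<N} - {i}. F l (s l))
      = (\<Sum>s\<in>profiles N d. \<Prod>l<N. G l (s l))"
    unfolding sum.inter_filter[OF finite_profiles]
    using G_prod[of "\<lambda>l g. g (_ l)"] by (intro sum.cong) (auto simp: G_def)
  also have "\<dots> = (\<Prod>l<N. \<Sum>j'\<le>d l. G l j')" by (rule sum_profiles_prod)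
  also have "\<dots> = (\<Prod>l\<in>{..<N} - {i}. \<Sum>j'\<le>d l. F l j')"
    using G_prod[of "\<lambda>l g. \<Sum>j'\<le>d l. g j'"] assms(2) by (simp add: G_def)
  finally show ?thesis .
qed

text \<open>A term \<open>(w, \<pi>)\<close> of \<open>ts i\<close> pays \<open>w\<close> to player \<open>i\<close> at every pure profile extending the
  partial profile \<open>\<pi>\<close>.\<close>

definition match_factor :: "(nat \<rightharpoonup> nat) \<Rightarrow> nat \<Rightarrow> nat \<Rightarrow> real" where
  "match_factor \<pi> l j = (case \<pi> l of None \<Rightarrow> 1 | Some t \<Rightarrow> of_bool (j = t))"

definition monomial_payoff ::
  "nat \<Rightarrow> (nat \<Rightarrow> (real \<times> (nat \<rightharpoonup> nat)) list) \<Rightarrow> nat \<Rightarrow> (nat \<Rightarrow> nat) \<Rightarrow> real" where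
  "monomial_payoff N ts i s = (\<Sum>(w, \<pi>)\<leftarrow>ts i. w * (\<Prod>l<N. match_factor \<pi> l (s l)))"

definition term_value :: "(nat \<Rightarrow> nat \<Rightarrow> real) \<Rightarrow> nat \<Rightarrow> nat \<Rightarrow> real \<times> (nat \<rightharpoonup> nat) \<Rightarrow> real" where
  "term_value \<sigma> i j = (\<lambda>(w, \<pi>). w * match_factor \<pi> i j * (\<Prod>l\<in>dom \<pi> - {i}. \<sigma> l (the (\<pi> l))))"

lemma expected_match_factor:
  assumes "i < N" "j \<le> d i"
    and \<pi>: "\<And>l t. \<pi> l = Some t \<Longrightarrow> l < N \<and> t \<le> d l"
    and rows: "\<And>l. l < N \<Longrightarrow> (\<Sum>j\<le>d l. \<sigma> l j) = 1"
  shows "(\<Sum>s\<in>{s\<in>profiles N d. s i = j}. (\<Prod>l<N. match_factor \<pi> l (s l)) * (\<Prod>l\<in>{..<N} - {i}. \<sigma> l (s l)))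
       = match_factor \<pi> i j * (\<Prod>l\<in>dom \<pi> - {i}. \<sigma> l (the (\<pi> l)))"
proof -
  have "(\<Sum>s\<in>{s\<in>profiles N d. s i = j}. (\<Prod>l<N. match_factor \<pi> l (s l)) * (\<Prod>l\<in>{..<N} - {i}. \<sigma> l (s l)))
      = (\<Sum>s\<in>{s\<in>profiles N d. s i = j}. match_factor \<pi> i j * (\<Prod>l\<in>{..<N} - {i}. match_factor \<pi> l (s l) * \<sigma> l (s l)))"
    using assms(1) by (intro sum.cong refl) (simp add: prod.remove prod.distrib)
  also have "\<dots> = match_factor \<pi> i j * (\<Prod>l\<in>{..<N} - {i}. \<Sum>j'\<le>d l. match_factor \<pi> l j' * \<sigma> l j')"
    using sum_profiles_fixed[of i N j d "\<lambda>l j'. match_factor \<pi> l j' * \<sigma> l j'", OF assms(1,2)]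
    by (simp add: sum_distrib_left[symmetric])
  also have "(\<Prod>l\<in>{..<N} - {i}. \<Sum>j'\<le>d l. match_factor \<pi> l j' * \<sigma> l j')
      = (\<Prod>l\<in>{..<N} - {i}. if l \<in> dom \<pi> then \<sigma> l (the (\<pi> l)) else 1)"
  proof (intro prod.cong refl)
    fix l assume l: "l \<in> {..<N} - {i}"
    show "(\<Sum>j'\<le>d l. match_factor \<pi> l j' * \<sigma> l j') = (if l \<in> dom \<pi> then \<sigma> l (the (\<pi> l)) else 1)"
    proof (cases "\<pi> l")
      case None then show ?thesis using rows l by (simp add: match_factor_def domIff)
    next
      case (Some t)
      have "(\<Sum>j'\<le>d l. of_bool (j' = t) * \<sigma> l j') = (\<Sum>j'\<le>d l. if j' = t then \<sigma> l j' else 0)"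
        by (intro sum.cong) auto
      then show ?thesis using \<pi>[OF Some] Some by (simp add: match_factor_def domIff)
    qed
  qed
  also have "\<dots> = (\<Prod>l\<in>dom \<pi> - {i}. \<sigma> l (the (\<pi> l)))"
  proof -
    have "({..<N} - {i}) \<inter> dom \<pi> = dom \<pi> - {i}" using \<pi> by auto
    then show ?thesis by (simp add: prod.If_cases)
  qed
  finally show ?thesis .
qed

lemma sum_sum_list_swap:
  "(\<Sum>s\<in>A. \<Sum>x\<leftarrow>xs. f x s) = (\<Sum>x\<leftarrow>xs. \<Sum>s\<in>A. f x s :: real)"
  by (induction xs) (simp_all add: sum.distrib)

lemma sum_list_map_concat: "sum_list (map f (concat xss)) = (\<Sum>xs\<leftarrow>xss. sum_list (map f xs))"
  by (induction xss) simp_all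

lemma dev_payoff_monomial:
  assumes "i < N" "j \<le> d i"
    and ts: "\<And>w \<pi> l t. (w, \<pi>) \<in> set (ts i) \<Longrightarrow> \<pi> l = Some t \<Longrightarrow> l < N \<and> t \<le> d l"
    and rows: "\<And>l. l < N \<Longrightarrow> (\<Sum>j\<le>d l. \<sigma> l j) = 1"
  shows "dev_payoff N d (monomial_payoff N ts) \<sigma> i j = sum_list (map (term_value \<sigma> i j) (ts i))"
proof -
  let ?A = "{s\<in>profiles N d. s i = j}"
  have "dev_payoff N d (monomial_payoff N ts) \<sigma> i j
      = (\<Sum>s\<in>?A. \<Sum>(w, \<pi>)\<leftarrow>ts i. w * ((\<Prod>l<N. match_factor \<pi> l (s l)) * (\<Prod>l\<in>{..<N} - {i}. \<sigma> l (s l))))"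
    unfolding dev_payoff_def monomial_payoff_def
    by (simp add: sum_list_mult_const[symmetric] case_prod_unfold mult.assoc)
  also have "\<dots> = (\<Sum>(w, \<pi>)\<leftarrow>ts i. w * (\<Sum>s\<in>?A. (\<Prod>l<N. match_factor \<pi> l (s l)) * (\<Prod>l\<in>{..<N} - {i}. \<sigma> l (s l))))"
    by (simp add: case_prod_unfold sum_sum_list_swap sum_distrib_left)
  also have "\<dots> = sum_list (map (term_value \<sigma> i j) (ts i))"
    using expected_match_factor[of i N j d _ \<sigma>, OF assms(1,2) _ rows] ts
    by (intro arg_cong[where f = sum_list] map_cong refl) (auto simp: term_value_def mult.assoc)
  finally show ?thesis .
qed

text \<open>Coordinate \<open>l\<close> of \<open>y\<close> is realised as the probability that player \<open>owner l\<close> plays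
  strategy \<open>slot l\<close>.\<close>

fun eq_terms ::
  "(nat \<Rightarrow> nat) \<Rightarrow> (nat \<Rightarrow> nat) \<Rightarrow> nat \<Rightarrow> nat \<Rightarrow> bilin \<Rightarrow> (real \<times> (nat \<rightharpoonup> nat)) list" where
  "eq_terms owner slot i s (c, L, B) =
     (c, [i \<mapsto> s]) # map (\<lambda>(w, l). (w, [i \<mapsto> s, owner l \<mapsto> slot l])) L
       @ map (\<lambda>(w, l, l'). (w, [i \<mapsto> s, owner l \<mapsto> slot l, owner l' \<mapsto> slot l'])) B"

lemma eq_terms_partial_profile:
  assumes "bilin_wf M e" "(w, \<pi>) \<in> set (eq_terms owner slot i s e)" "\<pi> l = Some t"
  shows "(l = i \<and> t = s) \<or> (\<exists>l'<2 * M. l = owner l' \<and> t = slot l')"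
proof -
  obtain c L B where e: "e = (c, L, B)" by (cases e)
  consider "\<pi> = [i \<mapsto> s]"
    | w' l1 where "(w', l1) \<in> set L" "\<pi> = [i \<mapsto> s, owner l1 \<mapsto> slot l1]"
    | w' l1 l2 where "(w', l1, l2) \<in> set B" "\<pi> = [i \<mapsto> s, owner l1 \<mapsto> slot l1, owner l2 \<mapsto> slot l2]"
    using assms(2) by (auto simp: e)
  then show ?thesis
  proof cases
    case 1
    then show ?thesis using assms(3) by (auto split: if_splits)
  next
    case (2 w' l1)
    then have "l1 < 2 * M" using assms(1) by (auto simp: e)
    then show ?thesis using 2 assms(3) by (auto split: if_splits)
  next
    case (3 w' l1 l2)
    then have "l1 < 2 * M" "l2 < 2 * M" using assms(1) by (auto simp: e)
    then show ?thesis using 3 assms(3) by (auto split: if_splits)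
  qed
qed

lemma term_value_const: "term_value \<sigma> i j (w, [i \<mapsto> s]) = of_bool (j = s) * w"
  by (simp add: term_value_def match_factor_def)

lemma term_value_single:
  assumes "l \<noteq> i"
  shows "term_value \<sigma> i j (w, [i \<mapsto> s, l \<mapsto> t]) = of_bool (j = s) * (w * \<sigma> l t)"
proof -
  have "dom [i \<mapsto> s, l \<mapsto> t] - {i} = {l}" using assms by auto
  then show ?thesis using assms by (simp add: term_value_def match_factor_def)
qed

lemma term_value_pair:
  assumes "l \<noteq> i" "l' \<noteq> i" "l \<noteq> l'"
  shows "term_value \<sigma> i j (w, [i \<mapsto> s, l \<mapsto> t, l' \<mapsto> t']) = of_bool (j = s) * (w * \<sigma> l t * \<sigma> l' t')"
proof -
  have "dom [i \<mapsto> s, l \<mapsto> t, l' \<mapsto> t'] - {i} = {l, l'}" using assms by auto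
  then show ?thesis using assms by (simp add: term_value_def match_factor_def)
qed

lemma eq_terms_value:
  assumes wf: "bilin_wf M e"
    and coords: "\<And>l. l < 2 * M \<Longrightarrow> owner l \<noteq> i \<and> \<sigma> (owner l) (slot l) = y l"
    and blocks: "\<And>l l'. l < M \<Longrightarrow> M \<le> l' \<Longrightarrow> l' < 2 * M \<Longrightarrow> owner l \<noteq> owner l'"
  shows "sum_list (map (term_value \<sigma> i j) (eq_terms owner slot i s e)) = of_bool (j = s) * bilin_val e y"
proof -
  obtain c L B where e: "e = (c, L, B)" by (cases e)
  have lin: "map (\<lambda>(w, l). term_value \<sigma> i j (w, [i \<mapsto> s, owner l \<mapsto> slot l])) L
      = map (\<lambda>(w, l). of_bool (j = s) * (w * y l)) L"
  proof (intro map_cong refl, clarify)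
    fix w l assume "(w, l) \<in> set L"
    then have "l < 2 * M" using wf by (auto simp: e)
    then show "term_value \<sigma> i j (w, [i \<mapsto> s, owner l \<mapsto> slot l]) = of_bool (j = s) * (w * y l)"
      using coords by (simp add: term_value_single)
  qed
  have bilin: "map (\<lambda>(w, l, l'). term_value \<sigma> i j (w, [i \<mapsto> s, owner l \<mapsto> slot l, owner l' \<mapsto> slot l'])) B
      = map (\<lambda>(w, l, l'). of_bool (j = s) * (w * y l * y l')) B"
  proof (intro map_cong refl, clarify)
    fix w l l' assume "(w, l, l') \<in> set B"
    then have "l < M" "M \<le> l'" "l' < 2 * M" using wf by (auto simp: e)
    then show "term_value \<sigma> i j (w, [i \<mapsto> s, owner l \<mapsto> slot l, owner l' \<mapsto> slot l'])
        = of_bool (j = s) * (w * y l * y l')"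
      using coords[of l] coords[of l'] blocks by (simp add: term_value_pair)
  qed
  have "sum_list (map (term_value \<sigma> i j) (eq_terms owner slot i s e))
      = term_value \<sigma> i j (c, [i \<mapsto> s])
        + sum_list (map (\<lambda>(w, l). term_value \<sigma> i j (w, [i \<mapsto> s, owner l \<mapsto> slot l])) L)
        + sum_list (map (\<lambda>(w, l, l'). term_value \<sigma> i j (w, [i \<mapsto> s, owner l \<mapsto> slot l, owner l' \<mapsto> slot l'])) B)"
    by (simp add: e map_map comp_def prod.case_distrib)
  also have "\<dots> = of_bool (j = s) * c + (\<Sum>(w, l)\<leftarrow>L. of_bool (j = s) * (w * y l))
      + (\<Sum>(w, l, l')\<leftarrow>B. of_bool (j = s) * (w * y l * y l'))"
    by (simp only: lin bilin term_value_const)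
  also have "\<dots> = of_bool (j = s) * bilin_val e y"
    by (simp add: e distrib_left sum_list_const_mult case_prod_unfold mult.assoc)
  finally show ?thesis .
qed

lemma sum_of_bool_Suc:
  "(\<Sum>k<r. of_bool (j = Suc k) * f k) = (if 1 \<le> j \<and> j \<le> r then f (j - 1) else (0::real))"
proof -
  have "(\<Sum>k<r. of_bool (j = Suc k) * f k) = (\<Sum>k<r. if k = j - 1 \<and> 1 \<le> j then f k else 0)"
    by (intro sum.cong) auto
  then show ?thesis by (cases "1 \<le> j") (auto simp: sum.delta')
qed

lemma sum_strat_of_coords: "(\<Sum>j\<le>d i. strat_of_coords d y i j) = 1"
proof -
  have "{..d i} = insert 0 {1..d i}" by auto
  then show ?thesis by (simp add: strat_of_coords_def sum.If_cases Int_absorb2)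
qed

lemma strat_of_coords_Suc: "strat_of_coords d y i (Suc a) = y (offset d i + a)"
  by (simp add: strat_of_coords_def)

lemma strat_of_coords_0: "strat_of_coords d y i 0 = 1 - (\<Sum>a<d i. y (offset d i + a))"
proof -
  have "{1..d i} = Suc ` {..<d i}" by (auto simp: image_iff) (metis Suc_pred lessThan_iff less_eq_Suc_le)
  then show ?thesis by (simp add: strat_of_coords_def sum.reindex)
qed

definition open_simplex_block :: "nat \<Rightarrow> nat \<Rightarrow> (nat \<Rightarrow> real) \<Rightarrow> bool" where
  "open_simplex_block off k y \<longleftrightarrow> (\<forall>a<k. 0 < y (off + a)) \<and> (\<Sum>a<k. y (off + a)) < 1"

lemma strat_of_coords_interior_iff:
  assumes "0 < d i"
  shows "(\<forall>j\<le>d i. 0 < strat_of_coords d y i j \<and> strat_of_coords d y i j < 1)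
     \<longleftrightarrow> open_simplex_block (offset d i) (d i) y"
  unfolding open_simplex_block_def
proof
  assume interior: "\<forall>j\<le>d i. 0 < strat_of_coords d y i j \<and> strat_of_coords d y i j < 1"
  have "0 < y (offset d i + a)" if "a < d i" for a
    using interior[rule_format, of "Suc a"] that by (simp add: strat_of_coords_Suc)
  moreover have "(\<Sum>a<d i. y (offset d i + a)) < 1"
    using interior[rule_format, of 0] by (simp add: strat_of_coords_0)
  ultimately show "(\<forall>a<d i. 0 < y (offset d i + a)) \<and> (\<Sum>a<d i. y (offset d i + a)) < 1" by blast
next
  assume pos_sum: "(\<forall>a<d i. 0 < y (offset d i + a)) \<and> (\<Sum>a<d i. y (offset d i + a)) < 1"
  let ?s = "\<Sum>a<d i. y (offset d i + a)"
  have "0 < ?s" using pos_sum assms by (intro sum_pos) auto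
  show "\<forall>j\<le>d i. 0 < strat_of_coords d y i j \<and> strat_of_coords d y i j < 1"
  proof (intro allI impI)
    fix j assume "j \<le> d i"
    show "0 < strat_of_coords d y i j \<and> strat_of_coords d y i j < 1"
    proof (cases j)
      case 0 then show ?thesis using pos_sum \<open>0 < ?s\<close> by (simp add: strat_of_coords_0)
    next
      case (Suc a)
      then have "a < d i" using \<open>j \<le> d i\<close> by simp
      then have "y (offset d i + a) \<le> ?s"
        using pos_sum by (intro member_le_sum) (auto simp: less_imp_le)
      then show ?thesis using pos_sum \<open>a < d i\<close> Suc by (simp add: strat_of_coords_Suc)
    qed
  qed
qed

section \<open>Coordinates ranging over an open simplex or an open cube\<close>

definition times_open_simplex :: "nat \<Rightarrow> (nat \<Rightarrow> real) set \<Rightarrow> nat \<Rightarrow> (nat \<Rightarrow> real) set" where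
  "times_open_simplex m W r = {y\<in>Rk (m + r). trunc_coords m y \<in> W \<and> open_simplex_block m r y}"

definition times_open_cube :: "nat \<Rightarrow> (nat \<Rightarrow> real) set \<Rightarrow> nat \<Rightarrow> (nat \<Rightarrow> real) set" where
  "times_open_cube m W r = {y\<in>Rk (m + r). trunc_coords m y \<in> W \<and> (\<forall>k<r. 0 < y (m + k) \<and> y (m + k) < 1)}"

lemma poly_fn_block_sum: "poly_fn (\<lambda>y. \<Sum>k<r. y (m + k) :: real)"
  by (intro poly_fn_sum poly_fn.coord) simp

lemma semialg_times_open_simplex: "semialg m W \<Longrightarrow> semialg (m + r) (times_open_simplex m W r)"
  unfolding times_open_simplex_def open_simplex_block_def
  by (intro semialg_conj semialg_trunc_preimage semialg_all_less semialg_less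
      poly_fn.const poly_fn.coord poly_fn_block_sum)

lemma semialg_times_open_cube: "semialg m W \<Longrightarrow> semialg (m + r) (times_open_cube m W r)"
  unfolding times_open_cube_def
  by (intro semialg_conj semialg_trunc_preimage semialg_all_less semialg_less poly_fn.const poly_fn.coord)

text \<open>The homeomorphism from \<open>W \<times> \<real>\<^sup>r\<close> sends the block \<open>x_m, \<dots>, x_(m+r-1)\<close> to the point with
  barycentric coordinates proportional to \<open>1, diff_recip_inv x_m, \<dots>, diff_recip_inv x_(m+r-1)\<close>.\<close>

definition simplex_slack :: "nat \<Rightarrow> nat \<Rightarrow> (nat \<Rightarrow> real) \<Rightarrow> real" where
  "simplex_slack m r y = 1 - (\<Sum>k<r. y (m + k))"

definition simplex_weight :: "nat \<Rightarrow> nat \<Rightarrow> (nat \<Rightarrow> real) \<Rightarrow> real" where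
  "simplex_weight m r x = 1 + (\<Sum>k<r. diff_recip_inv (x (m + k)))"

definition to_simplex :: "nat \<Rightarrow> nat \<Rightarrow> (nat \<Rightarrow> real) \<Rightarrow> nat \<Rightarrow> real" where
  "to_simplex m r x = (\<lambda>i. if i < m then x i
     else if i < m + r then diff_recip_inv (x i) / simplex_weight m r x else 0)"

definition from_simplex :: "nat \<Rightarrow> nat \<Rightarrow> (nat \<Rightarrow> real) \<Rightarrow> nat \<Rightarrow> real" where
  "from_simplex m r y = (\<lambda>i. if i < m then y i
     else if i < m + r then diff_recip (y i / simplex_slack m r y) else 0)"

lemma simplex_weight_ge_1: "1 \<le> simplex_weight m r x"
  unfolding simplex_weight_def using diff_recip_inv_pos
  by (simp add: sum_nonneg less_imp_le)

lemma simplex_slack_to_simplex: "simplex_slack m r (to_simplex m r x) = 1 / simplex_weight m r x"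
proof -
  have "(\<Sum>k<r. to_simplex m r x (m + k)) = (\<Sum>k<r. diff_recip_inv (x (m + k)) / simplex_weight m r x)"
    by (intro sum.cong) (simp_all add: to_simplex_def)
  also have "\<dots> = (simplex_weight m r x - 1) / simplex_weight m r x"
    by (simp add: sum_divide_distrib[symmetric] simplex_weight_def)
  finally show ?thesis
    using simplex_weight_ge_1[of m r x] by (simp add: simplex_slack_def diff_divide_distrib)
qed

lemma to_simplex_in_times_open_simplex:
  assumes "trunc_coords m x \<in> W"
  shows "to_simplex m r x \<in> times_open_simplex m W r"
proof -
  have W: "0 < simplex_weight m r x" "0 < 1 / simplex_weight m r x"
    using simplex_weight_ge_1[of m r x] by simp_all
  have "trunc_coords m (to_simplex m r x) = trunc_coords m x"
    by (auto simp: trunc_coords_def to_simplex_def)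
  moreover have "0 < to_simplex m r x (m + k)" if "k < r" for k
    using that diff_recip_inv_pos W by (simp add: to_simplex_def)
  moreover have "(\<Sum>k<r. to_simplex m r x (m + k)) < 1"
    using simplex_slack_to_simplex[of m r x, unfolded simplex_slack_def] W(2) by linarith
  ultimately show ?thesis
    using assms by (simp add: times_open_simplex_def open_simplex_block_def Rk_def to_simplex_def)
qed

lemma from_to_simplex:
  assumes "x \<in> Rk (m + r)"
  shows "from_simplex m r (to_simplex m r x) = x"
proof
  fix i
  have W: "simplex_weight m r x \<noteq> 0" using simplex_weight_ge_1[of m r x] by simp
  have ratio: "to_simplex m r x i / simplex_slack m r (to_simplex m r x) = diff_recip_inv (x i)"
    if "\<not> i < m" "i < m + r"
  proof -
    have "to_simplex m r x i = diff_recip_inv (x i) / simplex_weight m r x"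
      using that by (simp add: to_simplex_def)
    then show ?thesis using W by (simp add: simplex_slack_to_simplex)
  qed
  show "from_simplex m r (to_simplex m r x) i = x i"
  proof (rule less_add_cases[where i = i and m = m and r = r])
    fix k assume "i = m + k" "k < r"
    then have i: "\<not> i < m" "i < m + r" by simp_all
    then show ?thesis using ratio[OF i] by (simp add: from_simplex_def diff_recip_diff_recip_inv)
  qed (use assms in \<open>simp_all add: from_simplex_def Rk_def to_simplex_def\<close>)
qed

lemma
  assumes "y \<in> times_open_simplex m W r"
  shows simplex_slack_pos: "0 < simplex_slack m r y"
    and to_from_simplex: "to_simplex m r (from_simplex m r y) = y"
proof -
  have pos: "\<And>k. k < r \<Longrightarrow> 0 < y (m + k)" and slack: "0 < simplex_slack m r y"
    and y: "y \<in> Rk (m + r)"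
    using assms by (auto simp: times_open_simplex_def open_simplex_block_def simplex_slack_def)
  then show "0 < simplex_slack m r y" by simp
  have weight: "diff_recip_inv (from_simplex m r y (m + k)) = y (m + k) / simplex_slack m r y" if "k < r" for k
    using that pos slack by (simp add: from_simplex_def diff_recip_inv_diff_recip)
  have "(\<Sum>k<r. diff_recip_inv (from_simplex m r y (m + k))) = (\<Sum>k<r. y (m + k) / simplex_slack m r y)"
    by (intro sum.cong) (simp_all add: weight)
  then have total: "simplex_weight m r (from_simplex m r y) = 1 / simplex_slack m r y"
    using slack by (simp add: simplex_weight_def sum_divide_distrib[symmetric] field_simps simplex_slack_def)
  show "to_simplex m r (from_simplex m r y) = y"
  proof
    fix i
    show "to_simplex m r (from_simplex m r y) i = y i"
    proof (rule less_add_cases[where i = i and m = m and r = r])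
      fix k assume "i = m + k" "k < r"
      then show ?thesis using weight[of k] slack by (simp add: to_simplex_def total)
    qed (use y in \<open>simp_all add: to_simplex_def from_simplex_def Rk_def\<close>)
  qed
qed

lemma continuous_on_to_simplex: "continuous_on S (to_simplex m r)"
proof (rule continuous_on_coordinatewise_then_product)
  fix i
  have "continuous_on S (\<lambda>x. diff_recip_inv (x i) / simplex_weight m r x)"
    unfolding simplex_weight_def using simplex_weight_ge_1[unfolded simplex_weight_def]
    by (intro continuous_intros continuous_on_coordinate) (auto simp: add_nonneg_eq_0_iff)
  then show "continuous_on S (\<lambda>x. to_simplex m r x i)"
    unfolding to_simplex_def by (cases "i < m"; cases "i < m + r") (simp_all add: continuous_on_coordinate)
qed

lemma continuous_on_from_simplex: "continuous_on (times_open_simplex m W r) (from_simplex m r)"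
proof (rule continuous_on_coordinatewise_then_product)
  fix i
  show "continuous_on (times_open_simplex m W r) (\<lambda>y. from_simplex m r y i)"
  proof (rule less_add_cases[where i = i and m = m and r = r])
    fix k assume k: "i = m + k" "k < r"
    have "continuous_on (times_open_simplex m W r) (\<lambda>y. y i / simplex_slack m r y - simplex_slack m r y / y i)"
      unfolding simplex_slack_def using k
      by (intro continuous_intros continuous_on_coordinate) (auto simp: times_open_simplex_def open_simplex_block_def)
    then show ?thesis using k by (simp add: from_simplex_def diff_recip_def)
  qed (simp_all add: from_simplex_def continuous_on_coordinate)
qed

lemma from_simplex_in_cyl: "y \<in> times_open_simplex m W r \<Longrightarrow> from_simplex m r y \<in> cyl m W r"
proof -
  have "trunc_coords m (from_simplex m r y) = trunc_coords m y"
    by (auto simp: trunc_coords_def from_simplex_def)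
  then show "y \<in> times_open_simplex m W r \<Longrightarrow> from_simplex m r y \<in> cyl m W r"
    by (simp add: cyl_eq times_open_simplex_def open_simplex_block_def Rk_def from_simplex_def)
qed

definition from_simplex_denom :: "nat \<Rightarrow> nat \<Rightarrow> nat \<Rightarrow> (nat \<Rightarrow> real) \<Rightarrow> real" where
  "from_simplex_denom m r i y = (if i < m then 1 else y i * simplex_slack m r y)"

definition from_simplex_numer :: "nat \<Rightarrow> nat \<Rightarrow> nat \<Rightarrow> (nat \<Rightarrow> real) \<Rightarrow> real" where
  "from_simplex_numer m r i y = (if i < m then y i else y i ^ 2 - simplex_slack m r y ^ 2)"

lemma poly_fn_from_simplex_denom_numer:
  "poly_fn (from_simplex_denom m r i)" "poly_fn (from_simplex_numer m r i)"
proof -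
  have "poly_fn (simplex_slack m r)"
    unfolding simplex_slack_def by (intro poly_fn_diff poly_fn.const poly_fn_block_sum)
  then show "poly_fn (from_simplex_denom m r i)" "poly_fn (from_simplex_numer m r i)"
    unfolding from_simplex_denom_def from_simplex_numer_def
    by (cases "i < m"; simp add: poly_fn.intros poly_fn_diff poly_fn_power)+
qed

lemma eq_from_simplex_iff:
  assumes x: "x \<in> Rk (m + r)" and y: "y \<in> times_open_simplex m W r"
  shows "x = from_simplex m r y \<longleftrightarrow> (\<forall>i<m + r. from_simplex_denom m r i y * x i = from_simplex_numer m r i y)"
proof -
  have coord_iff: "x i = from_simplex m r y i \<longleftrightarrow> from_simplex_denom m r i y * x i = from_simplex_numer m r i y"
    if "i < m + r" for i
  proof (rule less_add_cases[where i = i and m = m and r = r])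
    fix k assume k: "i = m + k" "k < r"
    then have "0 < y i" using y by (simp add: times_open_simplex_def open_simplex_block_def)
    then show ?thesis
      using k diff_recip_ratio_iff[OF _ simplex_slack_pos[OF y], of "y i" "x i"]
      by (simp add: from_simplex_denom_def from_simplex_numer_def from_simplex_def mult_ac)
  qed (use that in \<open>simp_all add: from_simplex_denom_def from_simplex_numer_def from_simplex_def\<close>)
  have "x i = from_simplex m r y i" if "m + r \<le> i" for i
    using that x by (simp add: from_simplex_def Rk_def)
  then have "x = from_simplex m r y \<longleftrightarrow> (\<forall>i<m + r. x i = from_simplex m r y i)"
    by (metis ext not_less)
  then show ?thesis using coord_iff by simp
qed

lemma stably_iso_cyl_times_open_simplex:
  assumes W: "semialg m W"
  shows "stably_iso (m + r, cyl m W r) (m + r, times_open_simplex m W r)"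
proof (rule stably_iso_by_inverse_equations)
  show "semialg (m + r) (cyl m W r)" unfolding cyl_eq using W by (rule semialg_trunc_preimage)
  show "semialg (m + r) (times_open_simplex m W r)" using W by (rule semialg_times_open_simplex)
  show "to_simplex m r x \<in> times_open_simplex m W r \<and> from_simplex m r (to_simplex m r x) = x"
    if "x \<in> cyl m W r" for x
    using that by (simp add: cyl_eq to_simplex_in_times_open_simplex from_to_simplex)
  show "from_simplex m r y \<in> cyl m W r \<and> to_simplex m r (from_simplex m r y) = y"
    if "y \<in> times_open_simplex m W r" for y
    using that by (simp add: from_simplex_in_cyl to_from_simplex)
qed (simp_all add: continuous_on_to_simplex continuous_on_from_simplex poly_fn_from_simplex_denom_numer
    eq_from_simplex_iff)

lemma stably_iso_times_open_simplex:
  "semialg m W \<Longrightarrow> stably_iso (m + r, times_open_simplex m W r) (m, W)"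
  using stably_iso.sym[OF stably_iso_cyl_times_open_simplex] stably_iso.proj stably_iso.trans by blast

lemma times_open_cube_Suc:
  "times_open_cube m W (Suc r) = times_open_simplex (m + r) (times_open_cube m W r) 1"
proof -
  have "trunc_coords (m + r) y \<in> times_open_cube m W r
      \<longleftrightarrow> trunc_coords m y \<in> W \<and> (\<forall>k<r. 0 < y (m + k) \<and> y (m + k) < 1)" for y
    by (simp add: times_open_cube_def trunc_coords_trunc trunc_coords_in_Rk) (simp add: trunc_coords_def)
  then show ?thesis by (auto simp: times_open_cube_def times_open_simplex_def open_simplex_block_def less_Suc_eq)
qed

lemma stably_iso_times_open_cube:
  assumes "semialg m W"
  shows "stably_iso (m + r, times_open_cube m W r) (m, W)"
proof (induction r)
  case 0
  have "times_open_cube m W 0 = cyl m W 0" by (simp add: times_open_cube_def cyl_eq)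
  then show ?case using stably_iso.proj[OF assms, of 0] by simp
next
  case (Suc r)
  have "stably_iso (m + r + 1, times_open_simplex (m + r) (times_open_cube m W r) 1)
      (m + r, times_open_cube m W r)"
    using semialg_times_open_cube[OF assms] by (rule stably_iso_times_open_simplex)
  then show ?case using Suc.IH times_open_cube_Suc by (simp add: stably_iso.trans)
qed

section \<open>A bilinear system whose positive solutions form a copy of the variety\<close>

locale homogenized_variety =
  fixes n :: nat and Q :: "(nat \<Rightarrow> real) \<Rightarrow> real" and E :: expr and deg :: nat
  assumes poly_Q: "poly_fn Q"
    and vars_E: "expr_vars E \<subseteq> {..<2 * n}"
    and val_E: "\<And>z. positive_pairs n z \<Longrightarrow> expr_val E z = pair_prod n z ^ deg * Q (ratio_coords n z)"
begin

definition M :: nat where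
  "M = 2 * n + num_nodes E"

definition eps :: real where
  "eps = 1 / (real M + 1)"

definition node_scale :: real where
  "node_scale = eps / (2 * expr_bound E)"

definition node_base :: real where
  "node_base = eps / 2"

text \<open>Coordinates \<open>j\<close> and \<open>n + j\<close> (\<open>j < n\<close>) form a positive pair with sum \<open>eps\<close>; the next
  \<open>num_nodes E\<close> coordinates carry the circuit of \<open>E\<close>, whose root value \<open>node_base\<close> says that
  \<open>E\<close> vanishes; coordinates \<open>M, \<dots>, 2M - 1\<close> repeat the first \<open>M\<close>. All coordinates lie in
  \<open>(0, eps)\<close>, and \<open>eps\<close> is chosen so that \<open>M\<close> of them sum to less than 1.\<close>

definition core_eqs :: "bilin list" where
  "core_eqs = map (\<lambda>j. (- eps, [(1, j), (1, n + j)], [])) [0..<n]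
     @ circuit_eqs node_scale node_base M E (2 * n)
     @ [(- node_base, [(1, 2 * n)], [])]
     @ map (\<lambda>q. (0, [(1, M + q), (- 1, q)], [])) [0..<M]"

definition core :: "(nat \<Rightarrow> real) set" where
  "core = {z\<in>Rk (2 * M). (\<forall>i<2 * M. 0 < z i) \<and> (\<forall>e\<in>set core_eqs. bilin_val e z = 0)}"

definition zero_set :: "(nat \<Rightarrow> real) set" where
  "zero_set = {x\<in>Rk n. Q x = 0}"

lemma M_gt: "2 * n < M"
  using num_nodes_pos by (simp add: M_def)

lemma eps_pos: "0 < eps"
  by (simp add: eps_def)

lemma eps_less_1: "eps < 1"
  using M_gt by (simp add: eps_def)

lemma M_times_eps_less_1: "real M * eps < 1"
  by (simp add: eps_def)

lemma node_scale_nonzero: "node_scale \<noteq> 0"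
  using eps_pos expr_bound_ge_1[of E] by (simp add: node_scale_def)

lemma vars_E_less_M: "expr_vars E \<subseteq> {..<M}"
  using vars_E M_gt by auto

lemma core_eqs_wf:
  assumes "e \<in> set core_eqs"
  shows "bilin_wf M e"
proof -
  have "bilin_wf M e" if "e \<in> set (circuit_eqs node_scale node_base M E (2 * n))"
    using circuit_eqs_wf[OF vars_E_less_M _ that] by (simp add: M_def)
  then show ?thesis using assms M_gt by (auto simp: core_eqs_def)
qed

lemma semialg_core: "semialg (2 * M) core"
  unfolding core_def
  by (intro semialg_conj semialg_all_less semialg_all_list semialg.gt semialg.eq poly_fn.coord poly_fn_bilin_val)

lemma semialg_zero_set: "semialg n zero_set"
  unfolding zero_set_def by (rule semialg.eq[OF poly_Q])

lemma node_values_bounds: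
  assumes "computes node_scale node_base E (2 * n) z" "\<And>i. i < 2 * n \<Longrightarrow> \<bar>z i\<bar> < 1"
    and "2 * n \<le> q" "q < M"
  shows "0 < z q \<and> z q < eps"
proof (rule computes_bounds[OF _ _ order_refl eps_pos])
  show "computes (eps / (2 * expr_bound E)) (eps / 2) E (2 * n) z"
    using assms(1) by (simp add: node_scale_def node_base_def)
  show "\<bar>z i\<bar> < 1" if "i \<in> expr_vars E" for i using that vars_E assms(2) by auto
  show "q \<in> {2 * n..<2 * n + num_nodes E}" using assms(3,4) by (simp add: M_def)
qed

lemma core_facts:
  assumes z: "z \<in> core"
  shows core_pair_sum: "\<And>j. j < n \<Longrightarrow> z j + z (n + j) = eps"
    and core_computes: "computes node_scale node_base E (2 * n) z"
    and core_root: "z (2 * n) = node_base"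
    and core_copy: "\<And>q. q < M \<Longrightarrow> z (M + q) = z q"
    and core_pos: "\<And>i. i < 2 * M \<Longrightarrow> 0 < z i"
    and core_Rk: "z \<in> Rk (2 * M)"
proof -
  have eqs: "\<And>e. e \<in> set core_eqs \<Longrightarrow> bilin_val e z = 0"
    using z by (auto simp: core_def)
  show "\<And>i. i < 2 * M \<Longrightarrow> 0 < z i" "z \<in> Rk (2 * M)" using z by (auto simp: core_def)
  show "z j + z (n + j) = eps" if "j < n" for j
    using eqs[of "(- eps, [(1, j), (1, n + j)], [])"] that by (simp add: core_eqs_def)
  show copy: "z (M + q) = z q" if "q < M" for q
    using eqs[of "(0, [(1, M + q), (- 1, q)], [])"] that by (simp add: core_eqs_def)
  show "z (2 * n) = node_base"
    using eqs[of "(- node_base, [(1, 2 * n)], [])"] by (simp add: core_eqs_def)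
  have "\<forall>eq\<in>set (circuit_eqs node_scale node_base M E (2 * n)). bilin_val eq z = 0"
    using eqs by (simp add: core_eqs_def)
  moreover have "z (M + q) = z q" if "q \<in> {2 * n..<2 * n + num_nodes E}" for q
    using copy that by (simp add: M_def)
  ultimately show "computes node_scale node_base E (2 * n) z"
    using circuit_eqs_iff_computes[OF node_scale_nonzero] by blast
qed

lemma core_less_eps:
  assumes z: "z \<in> core" and i: "i < 2 * M"
  shows "z i < eps"
proof -
  have pairs: "z l < eps" if "l < 2 * n" for l
  proof (cases "l < n")
    case True
    then show ?thesis using core_pair_sum[OF z True] core_pos[OF z, of "n + l"] M_gt by auto
  next
    case False
    then obtain j where "l = n + j" "j < n" using \<open>l < 2 * n\<close> by (elim shifted_index) auto
    then show ?thesis using core_pair_sum[OF z, of j] core_pos[OF z, of j] M_gt by auto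
  qed
  have below_M: "z q < eps" if "q < M" for q
  proof (cases "q < 2 * n")
    case True then show ?thesis by (rule pairs)
  next
    case False
    have "\<bar>z l\<bar> < 1" if "l < 2 * n" for l
      using that pairs[of l] core_pos[OF z, of l] M_gt eps_less_1 by auto
    then show ?thesis
      using node_values_bounds[OF core_computes[OF z]] False \<open>q < M\<close> by simp
  qed
  show ?thesis
  proof (cases "i < M")
    case True then show ?thesis by (rule below_M)
  next
    case False
    then obtain q where "i = M + q" "q < M" using i by (elim shifted_index) auto
    then show ?thesis using below_M core_copy[OF z] by simp
  qed
qed

definition split_point :: "(nat \<Rightarrow> real) \<Rightarrow> nat \<Rightarrow> real" where
  "split_point x = (\<lambda>i. if i < n then eps * diff_recip_inv (x i) / (1 + diff_recip_inv (x i))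
     else if i < 2 * n then eps / (1 + diff_recip_inv (x (i - n))) else 0)"

definition core_point :: "(nat \<Rightarrow> real) \<Rightarrow> nat \<Rightarrow> real" where
  "core_point x = (let w = fill_nodes node_scale node_base E (2 * n) (split_point x) in
     (\<lambda>i. if i < M then w i else if i < 2 * M then w (i - M) else 0))"

lemma split_point_pair:
  assumes "j < n"
  shows "0 < split_point x j" "0 < split_point x (n + j)" "split_point x j + split_point x (n + j) = eps"
    and "diff_recip (split_point x j / split_point x (n + j)) = x j"
  using split_by_ratio[OF eps_pos, of "x j"] assms by (simp_all add: split_point_def)

lemma split_point_pos:
  assumes "i < 2 * n"
  shows "0 < split_point x i \<and> split_point x i < eps"
proof (cases "i < n")
  case True
  then show ?thesis using split_point_pair[OF True, of x] by auto
next
  case False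
  then obtain j where "i = n + j" "j < n" using assms by (elim shifted_index) auto
  then show ?thesis using split_point_pair[of j x] by auto
qed

lemma core_point_low: "i < 2 * n \<Longrightarrow> core_point x i = split_point x i"
  using M_gt by (simp add: core_point_def Let_def fill_nodes_outside)

lemma core_point_copy: "q < M \<Longrightarrow> core_point x (M + q) = core_point x q"
  by (simp add: core_point_def Let_def)

lemma computes_core_point: "computes node_scale node_base E (2 * n) (core_point x)"
proof -
  let ?w = "fill_nodes node_scale node_base E (2 * n) (split_point x)"
  have "computes node_scale node_base E (2 * n) ?w"
    using vars_E by (rule computes_fill_nodes)
  moreover have "core_point x i = ?w i" if "i \<in> expr_vars E \<union> {2 * n..<2 * n + num_nodes E}" for i
    using that vars_E by (auto simp: core_point_def Let_def M_def)
  ultimately show ?thesis using computes_cong by blast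
qed

lemma ratio_coords_core_point: "x \<in> Rk n \<Longrightarrow> ratio_coords n (core_point x) = x"
  using split_point_pair(4) by (auto simp: ratio_coords_def core_point_low Rk_def)

lemma core_point_in_core:
  assumes x: "x \<in> zero_set"
  shows "core_point x \<in> core"
proof -
  let ?z = "core_point x"
  have low: "0 < ?z i \<and> ?z i < eps" if "i < 2 * n" for i
    using split_point_pos[OF that] core_point_low[OF that] by simp
  have nodes: "0 < ?z q" if "2 * n \<le> q" "q < M" for q
    using node_values_bounds[OF computes_core_point _ that] low eps_less_1 by force
  have below_M: "0 < ?z q" if "q < M" for q
    using low nodes that by (cases "q < 2 * n") auto
  have pos: "0 < ?z i" if "i < 2 * M" for i
  proof (cases "i < M")
    case True then show ?thesis by (rule below_M)
  next
    case False
    then obtain q where "i = M + q" "q < M" using \<open>i < 2 * M\<close> by (elim shifted_index) auto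
    then show ?thesis using below_M core_point_copy by simp
  qed
  have pairs: "\<And>j. j < n \<Longrightarrow> ?z j + ?z (n + j) = eps"
    using split_point_pair(3) by (simp add: core_point_low)
  have circuit: "\<forall>eq\<in>set (circuit_eqs node_scale node_base M E (2 * n)). bilin_val eq ?z = 0"
    using circuit_eqs_iff_computes[OF node_scale_nonzero] computes_core_point core_point_copy
    by (simp add: M_def)
  have "positive_pairs n ?z" using low by (simp add: positive_pairs_def)
  then have "expr_val E ?z = 0"
    using val_E x by (simp add: ratio_coords_core_point zero_set_def)
  then have root: "?z (2 * n) = node_base"
    using computes_root[OF computes_core_point] by simp
  have "\<forall>e\<in>set core_eqs. bilin_val e ?z = 0"
    unfolding core_eqs_def set_append ball_Un using pairs circuit root core_point_copy by simp
  moreover have "?z \<in> Rk (2 * M)" by (simp add: core_point_def Let_def Rk_def)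
  ultimately show ?thesis using pos by (simp add: core_def)
qed

lemma ratio_coords_in_zero_set:
  assumes z: "z \<in> core"
  shows "ratio_coords n z \<in> zero_set"
proof -
  have pos: "positive_pairs n z" using core_pos[OF z] M_gt by (auto simp: positive_pairs_def)
  have "expr_val E z = 0"
    using computes_root[OF core_computes[OF z]] core_root[OF z] node_scale_nonzero by simp
  then have "Q (ratio_coords n z) = 0" using val_E[OF pos] pair_prod_pos[of n z] pos by simp
  then show ?thesis by (simp add: zero_set_def ratio_coords_def Rk_def)
qed

lemma split_point_ratio_coords:
  assumes z: "z \<in> core" and i: "i < 2 * n"
  shows "split_point (ratio_coords n z) i = z i"
proof -
  obtain j where j: "j < n" "i = j \<or> i = n + j"
    using i by (cases "i < n") (auto elim: shifted_index)
  have p: "0 < z j" "0 < z (n + j)" using core_pos[OF z] j M_gt by auto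
  have G: "diff_recip_inv (ratio_coords n z j) = z j / z (n + j)"
    using j p by (simp add: ratio_coords_def diff_recip_inv_diff_recip)
  have eps: "eps = z j + z (n + j)" using core_pair_sum[OF z j(1)] by simp
  show ?thesis
    using j G split_of_ratio[OF p] by (auto simp: split_point_def eps)
qed

lemma core_point_ratio_coords:
  assumes z: "z \<in> core"
  shows "core_point (ratio_coords n z) = z"
proof -
  let ?x = "ratio_coords n z"
  note split = split_point_ratio_coords[OF z]
  have below_M: "core_point ?x q = z q" if "q < M" for q
  proof (cases "q < 2 * n")
    case True then show ?thesis using split core_point_low by simp
  next
    case False
    have "\<And>i. i \<in> expr_vars E \<Longrightarrow> core_point ?x i = z i"
      using vars_E split core_point_low by auto
    then show ?thesis
      using computes_unique[OF computes_core_point core_computes[OF z]] False that by (simp add: M_def)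
  qed
  show ?thesis
  proof
    fix i
    show "core_point ?x i = z i"
    proof (cases "i < M")
      case True then show ?thesis by (rule below_M)
    next
      case False
      show ?thesis
      proof (cases "i < 2 * M")
        case True
        then obtain q where "i = M + q" "q < M" using False by (elim shifted_index) auto
        then show ?thesis using below_M core_copy[OF z] core_point_copy by simp
      next
        case False
        then show ?thesis using core_Rk[OF z] \<open>\<not> i < M\<close> by (simp add: core_point_def Let_def Rk_def)
      qed
    qed
  qed
qed

lemma continuous_on_core_point: "continuous_on S core_point"
proof -
  have nz: "1 + diff_recip_inv v \<noteq> 0" for v using diff_recip_inv_pos[of v] by linarith
  have split: "continuous_on S split_point"
  proof (rule continuous_on_coordinatewise_then_product)
    fix i
    have "continuous_on S (\<lambda>x. eps * diff_recip_inv (x i) / (1 + diff_recip_inv (x i)))"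
      "continuous_on S (\<lambda>x. eps / (1 + diff_recip_inv (x (i - n))))"
      by (intro continuous_intros continuous_on_coordinate; use nz in simp)+
    then show "continuous_on S (\<lambda>x. split_point x i)"
      by (cases "i < n"; cases "i < 2 * n") (simp_all add: split_point_def)
  qed
  have w: "continuous_on S (\<lambda>x. fill_nodes node_scale node_base E (2 * n) (split_point x) i)" for i
    using continuous_on_product_then_coordinatewise[OF continuous_on_fill_nodes[OF split]] .
  show ?thesis
  proof (rule continuous_on_coordinatewise_then_product)
    fix i
    show "continuous_on S (\<lambda>x. core_point x i)"
      using w by (cases "i < M"; cases "i < 2 * M") (simp_all add: core_point_def Let_def)
  qed
qed

lemma continuous_on_ratio_coords: "continuous_on core (ratio_coords n)"
proof (rule continuous_on_coordinatewise_then_product)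
  fix j
  show "continuous_on core (\<lambda>z. ratio_coords n z j)"
  proof (cases "j < n")
    case True
    then have "\<forall>z\<in>core. 0 < z j \<and> 0 < z (n + j)" using core_pos M_gt by auto
    then have "continuous_on core (\<lambda>z. z j / z (n + j) - z (n + j) / z j)"
      by (intro continuous_intros continuous_on_coordinate) auto
    then show ?thesis using True by (simp add: ratio_coords_def diff_recip_def)
  qed (simp add: ratio_coords_def)
qed

lemma stably_iso_zero_set_core: "stably_iso (n, zero_set) (2 * M, core)"
proof (rule stably_iso_by_inverse_equations)
  show "semialg n zero_set" by (rule semialg_zero_set)
  show "semialg (2 * M) core" by (rule semialg_core)
  show "continuous_on zero_set core_point" by (rule continuous_on_core_point)
  show "continuous_on core (ratio_coords n)" by (rule continuous_on_ratio_coords)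
  show "core_point x \<in> core \<and> ratio_coords n (core_point x) = x" if "x \<in> zero_set" for x
    using that core_point_in_core ratio_coords_core_point by (simp add: zero_set_def)
  show "ratio_coords n z \<in> zero_set \<and> core_point (ratio_coords n z) = z" if "z \<in> core" for z
    using that ratio_coords_in_zero_set core_point_ratio_coords by simp
  show "poly_fn (\<lambda>z. z j * z (n + j))" "poly_fn (\<lambda>z. z j ^ 2 - z (n + j) ^ 2)" for j
    by (intro poly_fn.intros poly_fn_diff poly_fn_power)+
  show "x = ratio_coords n z \<longleftrightarrow> (\<forall>j<n. z j * z (n + j) * x j = z j ^ 2 - z (n + j) ^ 2)"
    if "x \<in> Rk n" "z \<in> core" for x z
  proof -
    have "x j = ratio_coords n z j \<longleftrightarrow> z j * z (n + j) * x j = z j ^ 2 - z (n + j) ^ 2" if "j < n" for j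
      using that diff_recip_ratio_iff[of "z j" "z (n + j)" "x j"] core_pos[OF \<open>z \<in> core\<close>] M_gt
      by (simp add: ratio_coords_def mult_ac)
    moreover have "x j = ratio_coords n z j" if "\<not> j < n" for j
      using that \<open>x \<in> Rk n\<close> by (simp add: ratio_coords_def Rk_def)
    ultimately show ?thesis by (metis ext)
  qed
qed

lemma trunc_in_core_iff:
  assumes "y \<in> Rk (2 * M + r)"
  shows "trunc_coords (2 * M) y \<in> core
     \<longleftrightarrow> (\<forall>i<2 * M. 0 < y i) \<and> (\<forall>k<length core_eqs. bilin_val (core_eqs ! k) y = 0)"
proof -
  have "bilin_val e (trunc_coords (2 * M) y) = bilin_val e y" if "e \<in> set core_eqs" for e
    using core_eqs_wf[OF that] by (rule bilin_val_cong) (simp add: trunc_coords_def)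
  then have "(\<forall>e\<in>set core_eqs. bilin_val e (trunc_coords (2 * M) y) = 0)
      \<longleftrightarrow> (\<forall>k<length core_eqs. bilin_val (core_eqs ! k) y = 0)"
    by (simp add: all_set_conv_all_nth)
  moreover have "(\<forall>i<2 * M. 0 < trunc_coords (2 * M) y i) \<longleftrightarrow> (\<forall>i<2 * M. 0 < y i)"
    by (simp add: trunc_coords_def)
  ultimately show ?thesis by (simp add: core_def trunc_coords_in_Rk)
qed

section \<open>A game with binary strategy sets\<close>

text \<open>Players \<open>0, \<dots>, 2M - 1\<close> are dummies whose mixed strategies carry a point of the core;
  player \<open>2M + k\<close> is indifferent between his two strategies exactly when the point satisfies
  equation \<open>k\<close>.\<close>

definition binary_players :: nat where
  "binary_players = 2 * M + length core_eqs"

definition binary_terms :: "nat \<Rightarrow> (real \<times> (nat \<rightharpoonup> nat)) list" where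
  "binary_terms i =
     (if 2 * M \<le> i \<and> i < binary_players then eq_terms id (\<lambda>_. 1) i 1 (core_eqs ! (i - 2 * M)) else [])"

definition binary_payoff :: "nat \<Rightarrow> (nat \<Rightarrow> nat) \<Rightarrow> real" where
  "binary_payoff = monomial_payoff binary_players binary_terms"

lemma binary_dev_payoff:
  assumes "i < binary_players" "j \<le> 1"
  shows "dev_payoff binary_players (\<lambda>_. 1) binary_payoff (strat_of_coords (\<lambda>_. 1) y) i j
       = (if 2 * M \<le> i then of_bool (j = 1) * bilin_val (core_eqs ! (i - 2 * M)) y else 0)"
proof -
  have wf: "bilin_wf M (core_eqs ! (i - 2 * M))" if "2 * M \<le> i"
    using assms(1) that by (intro core_eqs_wf) (simp add: binary_players_def)
  have "dev_payoff binary_players (\<lambda>_. 1) binary_payoff (strat_of_coords (\<lambda>_. 1) y) i j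
      = sum_list (map (term_value (strat_of_coords (\<lambda>_. 1) y) i j) (binary_terms i))"
    unfolding binary_payoff_def
  proof (rule dev_payoff_monomial[of i binary_players j "\<lambda>_. 1", OF assms])
    fix w \<pi> l t assume "(w, \<pi>) \<in> set (binary_terms i)" "\<pi> l = Some t"
    then show "l < binary_players \<and> t \<le> 1"
      using eq_terms_partial_profile[OF wf] assms(1)
      by (fastforce simp: binary_terms_def binary_players_def split: if_splits)
  qed (rule sum_strat_of_coords)
  also have "\<dots> = (if 2 * M \<le> i then of_bool (j = 1) * bilin_val (core_eqs ! (i - 2 * M)) y else 0)"
    using assms(1) eq_terms_value[OF wf, where owner = id and i = i and \<sigma> = "strat_of_coords (\<lambda>_. 1) y"
        and y = y and slot = "\<lambda>_. 1" and s = 1 and j = j]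
    by (simp add: binary_terms_def strat_of_coords_def offset_def)
  finally show ?thesis .
qed

lemma binary_indifferent_iff:
  "(\<forall>i<binary_players. \<forall>j\<in>{1..1}.
      dev_payoff binary_players (\<lambda>_. 1) binary_payoff (strat_of_coords (\<lambda>_. 1) y) i j
    = dev_payoff binary_players (\<lambda>_. 1) binary_payoff (strat_of_coords (\<lambda>_. 1) y) i 0)
   \<longleftrightarrow> (\<forall>k<length core_eqs. bilin_val (core_eqs ! k) y = 0)"
proof -
  have "dev_payoff binary_players (\<lambda>_. 1) binary_payoff (strat_of_coords (\<lambda>_. 1) y) i 1
      = dev_payoff binary_players (\<lambda>_. 1) binary_payoff (strat_of_coords (\<lambda>_. 1) y) i 0
      \<longleftrightarrow> (2 * M \<le> i \<longrightarrow> bilin_val (core_eqs ! (i - 2 * M)) y = 0)" if "i < binary_players" for i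
    using binary_dev_payoff[OF that, of 1 y] binary_dev_payoff[OF that, of 0 y] by simp
  then have "(\<forall>i<binary_players. \<forall>j\<in>{1..1}.
      dev_payoff binary_players (\<lambda>_. 1) binary_payoff (strat_of_coords (\<lambda>_. 1) y) i j
    = dev_payoff binary_players (\<lambda>_. 1) binary_payoff (strat_of_coords (\<lambda>_. 1) y) i 0)
    \<longleftrightarrow> (\<forall>i<binary_players. 2 * M \<le> i \<longrightarrow> bilin_val (core_eqs ! (i - 2 * M)) y = 0)"
    by auto
  also have "\<dots> \<longleftrightarrow> (\<forall>k<length core_eqs. bilin_val (core_eqs ! k) y = 0)"
    unfolding binary_players_def all_less_add_iff by simp
  finally show ?thesis .
qed

lemma tmne_binary_eq:
  "tmne binary_players (\<lambda>_. 1) binary_payoff = {y\<in>Rk binary_players.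
     (\<forall>i<binary_players. 0 < y i \<and> y i < 1) \<and> (\<forall>k<length core_eqs. bilin_val (core_eqs ! k) y = 0)}"
proof -
  have "(\<forall>j\<le>1. 0 < strat_of_coords (\<lambda>_. 1) y i j \<and> strat_of_coords (\<lambda>_. 1) y i j < 1)
      \<longleftrightarrow> 0 < y i \<and> y i < 1" for y i
    using strat_of_coords_interior_iff[of "\<lambda>_. 1" i y] by (simp add: offset_def open_simplex_block_def)
  then show ?thesis unfolding tmne_def binary_indifferent_iff by simp
qed

lemma tmne_binary:
  "tmne binary_players (\<lambda>_. 1) binary_payoff = times_open_cube (2 * M) core (length core_eqs)"
proof (unfold tmne_binary_eq, intro set_eqI iffI)
  let ?r = "length core_eqs"
  have split: "(\<forall>i<binary_players. P i) \<longleftrightarrow> (\<forall>i<2 * M. P i) \<and> (\<forall>k<?r. P (2 * M + k))" for P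
    unfolding binary_players_def by (rule all_less_add_iff)
  fix y
  assume y: "y \<in> {y\<in>Rk binary_players. (\<forall>i<binary_players. 0 < y i \<and> y i < 1)
    \<and> (\<forall>k<?r. bilin_val (core_eqs ! k) y = 0)}"
  then have R: "y \<in> Rk (2 * M + ?r)" by (simp add: binary_players_def)
  then show "y \<in> times_open_cube (2 * M) core ?r"
    using y by (simp add: times_open_cube_def trunc_in_core_iff[OF R] split)
next
  let ?r = "length core_eqs"
  fix y assume y: "y \<in> times_open_cube (2 * M) core ?r"
  then have R: "y \<in> Rk (2 * M + ?r)" and c: "trunc_coords (2 * M) y \<in> core"
    by (simp_all add: times_open_cube_def)
  have "y i < 1" if "i < 2 * M" for i
    using core_less_eps[OF c that] eps_less_1 that by (simp add: trunc_coords_def)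
  then show "y \<in> {y\<in>Rk binary_players. (\<forall>i<binary_players. 0 < y i \<and> y i < 1)
    \<and> (\<forall>k<?r. bilin_val (core_eqs ! k) y = 0)}"
    using y c unfolding binary_players_def all_less_add_iff
    by (auto simp: times_open_cube_def trunc_in_core_iff[OF R])
qed

section \<open>A three-player game\<close>

text \<open>Players 0 and 1 are dummies whose strategies \<open>1, \<dots>, M\<close> carry the first and the
  second half of a point of the core; the strategies \<open>1, \<dots>, length core_eqs\<close> of player 2
  all pay the same as his strategy 0 exactly when the point satisfies every equation.\<close>

definition three_strats :: "nat \<Rightarrow> nat" where
  "three_strats i = (if i < 2 then M else length core_eqs)"

definition three_owner :: "nat \<Rightarrow> nat" where
  "three_owner l = (if l < M then 0 else 1)"

definition three_slot :: "nat \<Rightarrow> nat" where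
  "three_slot l = (if l < M then Suc l else Suc (l - M))"

definition three_terms :: "nat \<Rightarrow> (real \<times> (nat \<rightharpoonup> nat)) list" where
  "three_terms i = (if i = 2
     then concat (map (\<lambda>k. eq_terms three_owner three_slot 2 (Suc k) (core_eqs ! k)) [0..<length core_eqs])
     else [])"

definition three_payoff :: "nat \<Rightarrow> (nat \<Rightarrow> nat) \<Rightarrow> real" where
  "three_payoff = monomial_payoff 3 three_terms"

lemma offset_three_strats:
  "offset three_strats 0 = 0" "offset three_strats (Suc 0) = M" "offset three_strats 2 = 2 * M"
  by (simp_all add: offset_def three_strats_def numeral_2_eq_2)

lemma strat_three_owner_slot:
  "l < 2 * M \<Longrightarrow> strat_of_coords three_strats y (three_owner l) (three_slot l) = y l"
  by (simp add: three_owner_def three_slot_def strat_of_coords_Suc offset_three_strats)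

lemma three_dev_payoff:
  assumes "i < 3" "j \<le> three_strats i"
  shows "dev_payoff 3 three_strats three_payoff (strat_of_coords three_strats y) i j
       = (if i = 2 then \<Sum>k<length core_eqs. of_bool (j = Suc k) * bilin_val (core_eqs ! k) y else 0)"
proof -
  let ?\<sigma> = "strat_of_coords three_strats y"
  have wf: "bilin_wf M (core_eqs ! k)" if "k < length core_eqs" for k
    using that by (intro core_eqs_wf) simp
  have "dev_payoff 3 three_strats three_payoff ?\<sigma> i j
      = sum_list (map (term_value ?\<sigma> i j) (three_terms i))"
    unfolding three_payoff_def
  proof (rule dev_payoff_monomial[of i 3 j three_strats, OF assms])
    fix w \<pi> l t assume "(w, \<pi>) \<in> set (three_terms i)" "\<pi> l = Some t"
    then show "l < 3 \<and> t \<le> three_strats l"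
      using eq_terms_partial_profile[OF wf]
      by (fastforce simp: three_terms_def three_strats_def three_owner_def three_slot_def split: if_splits)
  qed (rule sum_strat_of_coords)
  also have "\<dots> = (if i = 2 then \<Sum>k<length core_eqs. of_bool (j = Suc k) * bilin_val (core_eqs ! k) y else 0)"
  proof (cases "i = 2")
    case True
    let ?F = "term_value ?\<sigma> 2 j"
    have per_eq: "sum_list (map ?F (eq_terms three_owner three_slot 2 (Suc k) (core_eqs ! k)))
        = of_bool (j = Suc k) * bilin_val (core_eqs ! k) y" if "k \<in> set [0..<length core_eqs]" for k
      using strat_three_owner_slot that
      by (intro eq_terms_value[OF wf]) (auto simp: three_owner_def)
    have "sum_list (map ?F (three_terms 2)) = (\<Sum>k\<leftarrow>[0..<length core_eqs].
        sum_list (map ?F (eq_terms three_owner three_slot 2 (Suc k) (core_eqs ! k))))"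
      by (simp add: three_terms_def sum_list_map_concat map_map comp_def)
    also have "\<dots> = (\<Sum>k\<leftarrow>[0..<length core_eqs]. of_bool (j = Suc k) * bilin_val (core_eqs ! k) y)"
      using per_eq by (intro arg_cong[where f = sum_list] map_cong) simp_all
    also have "\<dots> = (\<Sum>k<length core_eqs. of_bool (j = Suc k) * bilin_val (core_eqs ! k) y)"
      by (simp add: sum_set_upt_conv_sum_list_nat[symmetric] atLeast0LessThan)
    finally show ?thesis using True by simp
  qed (simp add: three_terms_def)
  finally show ?thesis .
qed


lemma core_eqs_nonempty: "0 < length core_eqs"
  by (simp add: core_eqs_def)

lemma core_block_sum_less_1:
  assumes "trunc_coords (2 * M) y \<in> core" "off + M \<le> 2 * M"
  shows "(\<Sum>a<M. y (off + a)) < 1"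
proof -
  have "y (off + a) < eps" if "a < M" for a
    using core_less_eps[OF assms(1), of "off + a"] that assms(2) by (simp add: trunc_coords_def)
  then have "(\<Sum>a<M. y (off + a)) < (\<Sum>a<M. eps)"
    using M_gt by (intro sum_strict_mono) auto
  then show ?thesis using M_times_eps_less_1 by simp
qed

lemma three_indifferent_iff:
  "(\<forall>i<3. \<forall>j\<in>{1..three_strats i}.
      dev_payoff 3 three_strats three_payoff (strat_of_coords three_strats y) i j
    = dev_payoff 3 three_strats three_payoff (strat_of_coords three_strats y) i 0)
   \<longleftrightarrow> (\<forall>k<length core_eqs. bilin_val (core_eqs ! k) y = 0)"
proof -
  have "(\<forall>j\<in>{1..length core_eqs}. bilin_val (core_eqs ! (j - 1)) y = 0)
      \<longleftrightarrow> (\<forall>k<length core_eqs. bilin_val (core_eqs ! k) y = 0)"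
  proof
    assume "\<forall>j\<in>{1..length core_eqs}. bilin_val (core_eqs ! (j - 1)) y = 0"
    then show "\<forall>k<length core_eqs. bilin_val (core_eqs ! k) y = 0"
      by (metis Suc_leI atLeastAtMost_iff diff_Suc_1 le_add1 plus_1_eq_Suc)
  qed auto
  then show ?thesis
    unfolding all_less_3 by (simp add: three_dev_payoff three_strats_def sum_of_bool_Suc)
qed

lemma tmne_three_eq:
  "tmne 3 three_strats three_payoff = {y\<in>Rk (2 * M + length core_eqs).
     open_simplex_block 0 M y \<and> open_simplex_block M M y \<and> open_simplex_block (2 * M) (length core_eqs) y
     \<and> (\<forall>k<length core_eqs. bilin_val (core_eqs ! k) y = 0)}"
proof -
  have "(\<forall>i<3. \<forall>j\<le>three_strats i. 0 < strat_of_coords three_strats y i j \<and> strat_of_coords three_strats y i j < 1)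
      \<longleftrightarrow> open_simplex_block 0 M y \<and> open_simplex_block M M y \<and> open_simplex_block (2 * M) (length core_eqs) y"
    for y
    unfolding all_less_3 using M_gt core_eqs_nonempty
      strat_of_coords_interior_iff[of three_strats 0 y] strat_of_coords_interior_iff[of three_strats 1 y]
      strat_of_coords_interior_iff[of three_strats 2 y]
    by (simp add: three_strats_def offset_three_strats)
  then show ?thesis
    unfolding tmne_def three_indifferent_iff by (simp add: three_strats_def numeral_3_eq_3 mult_2)
qed

lemma trunc_in_core_iff_blocks:
  assumes "y \<in> Rk (2 * M + r)"
  shows "trunc_coords (2 * M) y \<in> core
     \<longleftrightarrow> open_simplex_block 0 M y \<and> open_simplex_block M M y
       \<and> (\<forall>k<length core_eqs. bilin_val (core_eqs ! k) y = 0)"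
proof
  assume c: "trunc_coords (2 * M) y \<in> core"
  then show "open_simplex_block 0 M y \<and> open_simplex_block M M y
      \<and> (\<forall>k<length core_eqs. bilin_val (core_eqs ! k) y = 0)"
    using core_block_sum_less_1[OF c, of 0] core_block_sum_less_1[OF c, of M] trunc_in_core_iff[OF assms]
    by (simp add: open_simplex_block_def)
next
  assume "open_simplex_block 0 M y \<and> open_simplex_block M M y
      \<and> (\<forall>k<length core_eqs. bilin_val (core_eqs ! k) y = 0)"
  moreover have "(\<forall>i<2 * M. 0 < y i) \<longleftrightarrow> (\<forall>i<M. 0 < y i) \<and> (\<forall>k<M. 0 < y (M + k))"
    using all_less_add_iff[of M M] by (simp add: mult_2)
  ultimately show "trunc_coords (2 * M) y \<in> core"
    by (simp add: trunc_in_core_iff[OF assms] open_simplex_block_def)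
qed

lemma tmne_three: "tmne 3 three_strats three_payoff = times_open_simplex (2 * M) core (length core_eqs)"
  by (auto simp: tmne_three_eq times_open_simplex_def trunc_in_core_iff_blocks)

lemma stably_iso_core_zero_set: "stably_iso (2 * M, core) (n, zero_set)"
  by (rule stably_iso.sym[OF stably_iso_zero_set_core])

lemma stably_iso_three_player_game:
  "stably_iso ((\<Sum>i<3. three_strats i), tmne 3 three_strats three_payoff) (n, zero_set)"
proof -
  have "(\<Sum>i<3. three_strats i) = 2 * M + length core_eqs"
    by (simp add: three_strats_def numeral_3_eq_3)
  then show ?thesis unfolding tmne_three
    using stably_iso.trans[OF stably_iso_times_open_simplex[OF semialg_core] stably_iso_core_zero_set]
    by simp
qed

lemma stably_iso_binary_game:
  "stably_iso ((\<Sum>i<binary_players. (1::nat)), tmne binary_players (\<lambda>_. 1) binary_payoff) (n, zero_set)"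
  unfolding tmne_binary
  using stably_iso.trans[OF stably_iso_times_open_cube[OF semialg_core] stably_iso_core_zero_set]
  by (simp add: binary_players_def)

lemma binary_players_pos: "1 \<le> binary_players"
  using M_gt by (simp add: binary_players_def)

end

lemma real_variety_single_equation:
  assumes "real_variety n V"
  obtains Q where "poly_fn Q" "V = {x\<in>Rk n. Q x = 0}"
proof -
  obtain P where P: "finite P" "\<forall>p\<in>P. poly_fn p" and V: "V = {x\<in>Rk n. \<forall>p\<in>P. p x = 0}"
    using assms unfolding real_variety_def by blast
  have "poly_fn (\<lambda>x. \<Sum>p\<in>P. (p x)\<^sup>2)" using P by (intro poly_fn_sum poly_fn_power) auto
  moreover have "V = {x\<in>Rk n. (\<Sum>p\<in>P. (p x)\<^sup>2) = 0}"
    unfolding V using P(1) by (simp add: sum_nonneg_eq_0_iff)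
  ultimately show ?thesis by (rule that)
qed

theorem theorem1:
  fixes n :: nat and V :: "(nat \<Rightarrow> real) set"
  assumes "real_variety n V"
  shows "(\<exists>(d :: nat \<Rightarrow> nat) (u :: nat \<Rightarrow> (nat \<Rightarrow> nat) \<Rightarrow> real).
            stably_iso ((\<Sum>i<3. d i), tmne 3 d u) (n, V))
       \<and> (\<exists>(N :: nat) (u :: nat \<Rightarrow> (nat \<Rightarrow> nat) \<Rightarrow> real). N \<ge> 1 \<and>
            stably_iso ((\<Sum>i<N. (1::nat)), tmne N (\<lambda>_. 1) u) (n, V))"
proof -
  obtain Q where Q: "poly_fn Q" and V: "V = {x\<in>Rk n. Q x = 0}"
    using real_variety_single_equation[OF assms] .
  obtain E deg where "expr_vars E \<subseteq> {..<2 * n}"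
    and "\<And>z. positive_pairs n z \<Longrightarrow> expr_val E z = pair_prod n z ^ deg * Q (ratio_coords n z)"
    using homogenized_expr[OF Q] by blast
  then interpret homogenized_variety n Q E deg
    using Q by unfold_locales
  have "V = zero_set" by (simp add: V zero_set_def)
  then show ?thesis
    using stably_iso_three_player_game stably_iso_binary_game binary_players_pos by blast
qed

end
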